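(* Let $\mathbb{F}$ be a field and let $(\mathcal{C},f,m)$ be a Floer triple over $\mathbb{F}$, with associated groups $HM_a^b$, Novikov homology $HM$, and limits $\overline{HM}$, $\underline{HM}$ as defined in the context. Then the maps $\overline{\rho}\colon HM\to\overline{HM}$, $\underline{\rho}\colon HM\to\underline{HM}$ and $\kappa\colon\overline{HM}\to\underline{HM}$ are well-defined linear maps, they satisfy $\kappa\circ\overline{\rho}=\underline{\rho}$, the map $\overline{\rho}$ is an isomorphism, and $\kappa$ (and therefore also $\underline{\rho}$) is surjective.
   Context: A Floer triple $(\mathcal{C},f,m)$ over a field $\mathbb{F}$ consists of a set $\mathcal{C}$, a function $f\colon\mathcal{C}\to\mathbb{R}$ and a function $m\colon\mathcal{C}\times\mathcal{C}\to\mathbb{F}$ such that: (i) for all $a\le b$ the set $\mathcal{C}_a^b=\{c\in\mathcal{C}: a\le f(c)\le b\}$ is finite; (ii) if $m(c_1,c_2)\neq0$ then $f(c_1)<f(c_2)$; (iii) for all $c_1,c_3\in\mathcal{C}$, $\sum_{c_2\in\mathcal{C}}m(c_1,c_2)m(c_2,c_3)=0$ (a finite sum by (i),(ii)). (Example: $\mathcal{C}$ the critical points of a Morse function whose moduli spaces of gradient lines in each action window are compact up to breaking, $m$ the signed count of gradient lines.) For $a,b\in\mathbb{R}$ let $CM_a^b$ be the $\mathbb{F}$-vector space with basis $\mathcal{C}_a^b$ (zero if $a>b$), with differential $\partial_a^b c=\sum_{c'\in\mathcal{C}_a^b}m(c',c)\,c'$; $(\partial_a^b)^2=0$, and $HM_a^b$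 denotes its homology. For $a_1\le a_2$ and any $b$, $p^b_{a_2,a_1}\colon CM^b_{a_1}\to CM^b_{a_2}$ sends a basis element $c$ to $c$ if $f(c)\ge a_2$ and to $0$ otherwise; for $b_1\le b_2$ and any $a$, $i_a^{b_2,b_1}\colon CM_a^{b_1}\to CM_a^{b_2}$ is the inclusion. These are chain maps; $Hp$, $Hi$ denote the induced maps on homology. Limits: for a family $(G_a)_{a\in\mathbb{R}}$ with maps $\pi_{a_2,a_1}\colon G_{a_1}\to G_{a_2}$ ($a_1\le a_2$), $\varprojlim_{a\to-\infty}G_a=\{(x_a)\in\prod_a G_a:\pi_{a_2,a_1}(x_{a_1})=x_{a_2}\ \forall a_1\le a_2\}$. For a family $(G^b)_{b\in\mathbb{R}}$ with maps $\iota^{b_2,b_1}\colon G^{b_1}\to G^{b_2}$ ($b_1\le b_2$), $\varinjlim_{b\to\infty}G^b=\bigoplus_b G^b/\langle \iota^{b_2,b_1}(x)-x\rangle$, with canonical maps $\iota^b\colon G^b\to\varinjlim G$. Define $\overline{HM}=\varinjlim_{b\to\infty}\varprojlim_{a\to-\infty}HM_a^b$ (inverse limit with respect to $Hp^b$, then direct limit with respect to the maps induced by $Hi$ componentwise) and $\underline{HM}=\varprojlim_{a\to-\infty}\varinjlim_{b\to\infty}HM_a^b$ (direct limit with respect to $Hi_a$, then inverse limit with respect to the maps induced by $Hp$). The canonical map $\kappa\colon\overline{HM}\to\underline{HM}$ sends the class of $(x_a)_a\in\varprojlim_a HM_a^b$ to $(\iota_a^b(x_a))_a$, where $\iota_a^b\colon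 HM_a^b\to\varinjlim_{b'}HM_a^{b'}$ is canonical. Novikov complex: $\Lambda$ is the space of formal sums $\xi=\sum_{c\in\mathcal{C}}\gamma_c c$, $\gamma_c\in\mathbb{F}$, such that $\{c:\gamma_c\ne0,\ f(c)>b\}$ is finite for every $b\in\mathbb{R}$, with differential $\partial\xi=\sum_c\gamma_c\sum_{c'}m(c',c)c'$; $HM=H(\Lambda,\partial)$. For a cycle $\xi$ choose $b$ with $f(c)\le b$ for all $c$ in the support of $\xi$, and let $\xi_a^b\in CM_a^b$ be the truncation keeping the terms with $a\le f(c)\le b$ (a cycle). Then $\overline{\rho}[\xi]$ is the image in $\overline{HM}$ of $([\xi_a^b])_a\in\varprojlim_a HM_a^b$, and $\underline{\rho}[\xi]=(\iota_a^b[\xi_a^b])_a\in\underline{HM}$. *)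

theory Defs
  imports Complex_Main "HOL-Library.Function_Algebras"
begin

record ('v, 'k) vs =
  vcarrier :: "'v set"
  vzero :: 'v
  vadd :: "'v \<Rightarrow> 'v \<Rightarrow> 'v"
  vscale :: "'k \<Rightarrow> 'v \<Rightarrow> 'v"

definition lin_map :: "('v, 'k) vs \<Rightarrow> ('w, 'k) vs \<Rightarrow> ('v \<Rightarrow> 'w) \<Rightarrow> bool" where
  "lin_map V W \<phi> \<longleftrightarrow>
     (\<forall>x\<in>vcarrier V. \<phi> x \<in> vcarrier W) \<and>
     (\<forall>x\<in>vcarrier V. \<forall>y\<in>vcarrier V. \<phi> (vadd V x y) = vadd W (\<phi> x) (\<phi> y)) \<and>
     (\<forall>k. \<forall>x\<in>vcarrier V. \<phi> (vscale V k x) = vscale W k (\<phi> x))"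

definition lin_iso :: "('v, 'k) vs \<Rightarrow> ('w, 'k) vs \<Rightarrow> ('v \<Rightarrow> 'w) \<Rightarrow> bool" where
  "lin_iso V W \<phi> \<longleftrightarrow> lin_map V W \<phi> \<and> bij_betw \<phi> (vcarrier V) (vcarrier W)"

definition pick :: "'a set \<Rightarrow> 'a" where
  "pick X = (SOME x. x \<in> X)"

definition hcls :: "('c \<Rightarrow> 'k::field) set \<Rightarrow> (('c \<Rightarrow> 'k) \<Rightarrow> ('c \<Rightarrow> 'k)) \<Rightarrow> ('c \<Rightarrow> 'k) \<Rightarrow> ('c \<Rightarrow> 'k) set" where
  "hcls Ch d z = {z + d y | y. y \<in> Ch}"

definition hom_vs :: "('c \<Rightarrow> 'k::field) set \<Rightarrow> (('c \<Rightarrow> 'k) \<Rightarrow> ('c \<Rightarrow> 'k)) \<Rightarrow> (('c \<Rightarrow> 'k) set, 'k) vs" where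
  "hom_vs Ch d =
     \<lparr> vcarrier = hcls Ch d ` {z \<in> Ch. d z = 0},
       vzero = hcls Ch d 0,
       vadd = (\<lambda>X Y. hcls Ch d (pick X + pick Y)),
       vscale = (\<lambda>k X. hcls Ch d (\<lambda>c. k * pick X c)) \<rparr>"

definition hmap :: "('c \<Rightarrow> 'k::field) set \<Rightarrow> (('c \<Rightarrow> 'k) \<Rightarrow> ('c \<Rightarrow> 'k)) \<Rightarrow> (('c \<Rightarrow> 'k) \<Rightarrow> ('c \<Rightarrow> 'k))
                    \<Rightarrow> ('c \<Rightarrow> 'k) set \<Rightarrow> ('c \<Rightarrow> 'k) set" where
  "hmap Ch' d' g X = hcls Ch' d' (g (pick X))"

text \<open>Inverse limit w.r.t. maps \<open>\<pi> a2 a1 : G a1 \<rightarrow> G a2\<close> for \<open>a1 \<le> a2\<close>.\<close>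
definition invlim_vs :: "(real \<Rightarrow> ('v, 'k) vs) \<Rightarrow> (real \<Rightarrow> real \<Rightarrow> 'v \<Rightarrow> 'v) \<Rightarrow> (real \<Rightarrow> 'v, 'k) vs" where
  "invlim_vs G \<pi> =
     \<lparr> vcarrier = {x. (\<forall>a. x a \<in> vcarrier (G a)) \<and> (\<forall>a1 a2. a1 \<le> a2 \<longrightarrow> \<pi> a2 a1 (x a1) = x a2)},
       vzero = (\<lambda>a. vzero (G a)),
       vadd = (\<lambda>x y a. vadd (G a) (x a) (y a)),
       vscale = (\<lambda>k x a. vscale (G a) k (x a)) \<rparr>"

text \<open>Direct limit w.r.t. maps \<open>\<iota> b2 b1 : G b1 \<rightarrow> G b2\<close> for \<open>b1 \<le> b2\<close>;
  an element is the class of a pair \<open>(b, x)\<close> with \<open>x \<in> G b\<close>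
  (\<open>dcls G \<iota> b\<close> is the canonical map \<open>G b \<rightarrow> lim G\<close>).\<close>
definition dcls :: "(real \<Rightarrow> ('v, 'k) vs) \<Rightarrow> (real \<Rightarrow> real \<Rightarrow> 'v \<Rightarrow> 'v) \<Rightarrow> real \<Rightarrow> 'v \<Rightarrow> (real \<times> 'v) set" where
  "dcls G \<iota> b x = {(b', x'). x' \<in> vcarrier (G b') \<and>
                      (\<exists>b''. b \<le> b'' \<and> b' \<le> b'' \<and> \<iota> b'' b x = \<iota> b'' b' x')}"

definition dlim_vs :: "(real \<Rightarrow> ('v, 'k) vs) \<Rightarrow> (real \<Rightarrow> real \<Rightarrow> 'v \<Rightarrow> 'v) \<Rightarrow> ((real \<times> 'v) set, 'k) vs" where
  "dlim_vs G \<iota> =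
     \<lparr> vcarrier = {dcls G \<iota> b x | b x. x \<in> vcarrier (G b)},
       vzero = dcls G \<iota> 0 (vzero (G 0)),
       vadd = (\<lambda>X Y. case pick X of (b1, x1) \<Rightarrow> case pick Y of (b2, x2) \<Rightarrow>
                 dcls G \<iota> (max b1 b2) (vadd (G (max b1 b2)) (\<iota> (max b1 b2) b1 x1) (\<iota> (max b1 b2) b2 x2))),
       vscale = (\<lambda>k X. case pick X of (b1, x1) \<Rightarrow> dcls G \<iota> b1 (vscale (G b1) k x1)) \<rparr>"

definition dlim_map :: "(real \<Rightarrow> ('w, 'k) vs) \<Rightarrow> (real \<Rightarrow> real \<Rightarrow> 'w \<Rightarrow> 'w) \<Rightarrow> (real \<Rightarrow> 'v \<Rightarrow> 'w)
                        \<Rightarrow> (real \<times> 'v) set \<Rightarrow> (real \<times> 'w) set" where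
  "dlim_map G' \<iota>' h X = (case pick X of (b, x) \<Rightarrow> dcls G' \<iota>' b (h b x))"

definition Cab :: "'c set \<Rightarrow> ('c \<Rightarrow> real) \<Rightarrow> real \<Rightarrow> real \<Rightarrow> 'c set" where
  "Cab C f a b = {c \<in> C. a \<le> f c \<and> f c \<le> b}"

definition floer_triple :: "'c set \<Rightarrow> ('c \<Rightarrow> real) \<Rightarrow> ('c \<Rightarrow> 'c \<Rightarrow> 'k::field) \<Rightarrow> bool" where
  "floer_triple C f m \<longleftrightarrow>
     (\<forall>a b. a \<le> b \<longrightarrow> finite (Cab C f a b)) \<and>
     (\<forall>c1\<in>C. \<forall>c2\<in>C. m c1 c2 \<noteq> 0 \<longrightarrow> f c1 < f c2) \<and>
     (\<forall>c1\<in>C. \<forall>c3\<in>C. (\<Sum>c2\<in>{c2\<in>C. m c1 c2 * m c2 c3 \<noteq> 0}. m c1 c2 * m c2 c3) = 0)"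

definition CM :: "'c set \<Rightarrow> ('c \<Rightarrow> real) \<Rightarrow> real \<Rightarrow> real \<Rightarrow> ('c \<Rightarrow> 'k::field) set" where
  "CM C f a b = {x. \<forall>c. x c \<noteq> 0 \<longrightarrow> c \<in> Cab C f a b}"

definition dCM :: "'c set \<Rightarrow> ('c \<Rightarrow> real) \<Rightarrow> ('c \<Rightarrow> 'c \<Rightarrow> 'k::field) \<Rightarrow> real \<Rightarrow> real \<Rightarrow> ('c \<Rightarrow> 'k) \<Rightarrow> ('c \<Rightarrow> 'k)" where
  "dCM C f m a b x = (\<lambda>c'. if c' \<in> Cab C f a b then (\<Sum>c\<in>Cab C f a b. m c' c * x c) else 0)"

definition HMab :: "'c set \<Rightarrow> ('c \<Rightarrow> real) \<Rightarrow> ('c \<Rightarrow> 'c \<Rightarrow> 'k::field) \<Rightarrow> real \<Rightarrow> real \<Rightarrow> (('c \<Rightarrow> 'k) set, 'k) vs" where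
  "HMab C f m a b = hom_vs (CM C f a b) (dCM C f m a b)"

text \<open>\<open>Hp^b_{a2,a1} : HM_{a1}^b \<rightarrow> HM_{a2}^b\<close> and \<open>Hi_a^{b2,b1} : HM_a^{b1} \<rightarrow> HM_a^{b2}\<close>.\<close>
definition Hp :: "'c set \<Rightarrow> ('c \<Rightarrow> real) \<Rightarrow> ('c \<Rightarrow> 'c \<Rightarrow> 'k::field) \<Rightarrow> real \<Rightarrow> real \<Rightarrow> real
                  \<Rightarrow> ('c \<Rightarrow> 'k) set \<Rightarrow> ('c \<Rightarrow> 'k) set" where
  "Hp C f m b a2 a1 = hmap (CM C f a2 b) (dCM C f m a2 b) (\<lambda>x c. if a2 \<le> f c then x c else 0)"

definition Hi :: "'c set \<Rightarrow> ('c \<Rightarrow> real) \<Rightarrow> ('c \<Rightarrow> 'c \<Rightarrow> 'k::field) \<Rightarrow> real \<Rightarrow> real \<Rightarrow> real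
                  \<Rightarrow> ('c \<Rightarrow> 'k) set \<Rightarrow> ('c \<Rightarrow> 'k) set" where
  "Hi C f m a b2 b1 = hmap (CM C f a b2) (dCM C f m a b2) id"

definition invlimB :: "'c set \<Rightarrow> ('c \<Rightarrow> real) \<Rightarrow> ('c \<Rightarrow> 'c \<Rightarrow> 'k::field) \<Rightarrow> real
                       \<Rightarrow> (real \<Rightarrow> ('c \<Rightarrow> 'k) set, 'k) vs" where
  "invlimB C f m b = invlim_vs (\<lambda>a. HMab C f m a b) (Hp C f m b)"

definition iotaB :: "'c set \<Rightarrow> ('c \<Rightarrow> real) \<Rightarrow> ('c \<Rightarrow> 'c \<Rightarrow> 'k::field) \<Rightarrow> real \<Rightarrow> real
                     \<Rightarrow> (real \<Rightarrow> ('c \<Rightarrow> 'k) set) \<Rightarrow> (real \<Rightarrow> ('c \<Rightarrow> 'k) set)" where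
  "iotaB C f m b2 b1 x = (\<lambda>a. Hi C f m a b2 b1 (x a))"

definition HMbar :: "'c set \<Rightarrow> ('c \<Rightarrow> real) \<Rightarrow> ('c \<Rightarrow> 'c \<Rightarrow> 'k::field)
                     \<Rightarrow> ((real \<times> (real \<Rightarrow> ('c \<Rightarrow> 'k) set)) set, 'k) vs" where
  "HMbar C f m = dlim_vs (invlimB C f m) (iotaB C f m)"

definition dlimA :: "'c set \<Rightarrow> ('c \<Rightarrow> real) \<Rightarrow> ('c \<Rightarrow> 'c \<Rightarrow> 'k::field) \<Rightarrow> real
                     \<Rightarrow> ((real \<times> ('c \<Rightarrow> 'k) set) set, 'k) vs" where
  "dlimA C f m a = dlim_vs (\<lambda>b. HMab C f m a b) (Hi C f m a)"

definition piA :: "'c set \<Rightarrow> ('c \<Rightarrow> real) \<Rightarrow> ('c \<Rightarrow> 'c \<Rightarrow> 'k::field) \<Rightarrow> real \<Rightarrow> real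
                   \<Rightarrow> (real \<times> ('c \<Rightarrow> 'k) set) set \<Rightarrow> (real \<times> ('c \<Rightarrow> 'k) set) set" where
  "piA C f m a2 a1 X = dlim_map (\<lambda>b. HMab C f m a2 b) (Hi C f m a2) (\<lambda>b. Hp C f m b a2 a1) X"

definition HMunder :: "'c set \<Rightarrow> ('c \<Rightarrow> real) \<Rightarrow> ('c \<Rightarrow> 'c \<Rightarrow> 'k::field)
                       \<Rightarrow> (real \<Rightarrow> (real \<times> ('c \<Rightarrow> 'k) set) set, 'k) vs" where
  "HMunder C f m = invlim_vs (dlimA C f m) (piA C f m)"

definition kappa_rep :: "'c set \<Rightarrow> ('c \<Rightarrow> real) \<Rightarrow> ('c \<Rightarrow> 'c \<Rightarrow> 'k::field)
                         \<Rightarrow> real \<times> (real \<Rightarrow> ('c \<Rightarrow> 'k) set) \<Rightarrow> real \<Rightarrow> (real \<times> ('c \<Rightarrow> 'k) set) set" where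
  "kappa_rep C f m p = (case p of (b, x) \<Rightarrow> (\<lambda>a. dcls (\<lambda>b'. HMab C f m a b') (Hi C f m a) b (x a)))"

definition kappa :: "'c set \<Rightarrow> ('c \<Rightarrow> real) \<Rightarrow> ('c \<Rightarrow> 'c \<Rightarrow> 'k::field)
                     \<Rightarrow> (real \<times> (real \<Rightarrow> ('c \<Rightarrow> 'k) set)) set \<Rightarrow> real \<Rightarrow> (real \<times> ('c \<Rightarrow> 'k) set) set" where
  "kappa C f m D = kappa_rep C f m (pick D)"

definition Nov :: "'c set \<Rightarrow> ('c \<Rightarrow> real) \<Rightarrow> ('c \<Rightarrow> 'k::field) set" where
  "Nov C f = {\<xi>. (\<forall>c. \<xi> c \<noteq> 0 \<longrightarrow> c \<in> C) \<and> (\<forall>b. finite {c. \<xi> c \<noteq> 0 \<and> b < f c})}"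

definition dNov :: "'c set \<Rightarrow> ('c \<Rightarrow> 'c \<Rightarrow> 'k::field) \<Rightarrow> ('c \<Rightarrow> 'k) \<Rightarrow> ('c \<Rightarrow> 'k)" where
  "dNov C m \<xi> = (\<lambda>c'. if c' \<in> C then (\<Sum>c\<in>{c\<in>C. \<xi> c * m c' c \<noteq> 0}. \<xi> c * m c' c) else 0)"

definition HMnov :: "'c set \<Rightarrow> ('c \<Rightarrow> real) \<Rightarrow> ('c \<Rightarrow> 'c \<Rightarrow> 'k::field) \<Rightarrow> (('c \<Rightarrow> 'k) set, 'k) vs" where
  "HMnov C f m = hom_vs (Nov C f) (dNov C m)"

definition trunc :: "('c \<Rightarrow> real) \<Rightarrow> real \<Rightarrow> real \<Rightarrow> ('c \<Rightarrow> 'k::field) \<Rightarrow> ('c \<Rightarrow> 'k)" where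
  "trunc f a b \<xi> = (\<lambda>c. if a \<le> f c \<and> f c \<le> b then \<xi> c else 0)"

definition upper_bound :: "('c \<Rightarrow> real) \<Rightarrow> ('c \<Rightarrow> 'k::field) \<Rightarrow> real \<Rightarrow> bool" where
  "upper_bound f \<xi> b \<longleftrightarrow> (\<forall>c. \<xi> c \<noteq> 0 \<longrightarrow> f c \<le> b)"

definition rhobar_cyc :: "'c set \<Rightarrow> ('c \<Rightarrow> real) \<Rightarrow> ('c \<Rightarrow> 'c \<Rightarrow> 'k::field) \<Rightarrow> ('c \<Rightarrow> 'k) \<Rightarrow> real
                          \<Rightarrow> (real \<times> (real \<Rightarrow> ('c \<Rightarrow> 'k) set)) set" where
  "rhobar_cyc C f m \<xi> b =
     dcls (invlimB C f m) (iotaB C f m) b (\<lambda>a. hcls (CM C f a b) (dCM C f m a b) (trunc f a b \<xi>))"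

definition rhounder_cyc :: "'c set \<Rightarrow> ('c \<Rightarrow> real) \<Rightarrow> ('c \<Rightarrow> 'c \<Rightarrow> 'k::field) \<Rightarrow> ('c \<Rightarrow> 'k) \<Rightarrow> real
                            \<Rightarrow> real \<Rightarrow> (real \<times> ('c \<Rightarrow> 'k) set) set" where
  "rhounder_cyc C f m \<xi> b =
     (\<lambda>a. dcls (\<lambda>b'. HMab C f m a b') (Hi C f m a) b (hcls (CM C f a b) (dCM C f m a b) (trunc f a b \<xi>)))"

definition rhobar :: "'c set \<Rightarrow> ('c \<Rightarrow> real) \<Rightarrow> ('c \<Rightarrow> 'c \<Rightarrow> 'k::field) \<Rightarrow> ('c \<Rightarrow> 'k) set
                      \<Rightarrow> (real \<times> (real \<Rightarrow> ('c \<Rightarrow> 'k) set)) set" where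
  "rhobar C f m X = rhobar_cyc C f m (pick X) (SOME b. upper_bound f (pick X) b)"

definition rhounder :: "'c set \<Rightarrow> ('c \<Rightarrow> real) \<Rightarrow> ('c \<Rightarrow> 'c \<Rightarrow> 'k::field) \<Rightarrow> ('c \<Rightarrow> 'k) set
                        \<Rightarrow> real \<Rightarrow> (real \<times> ('c \<Rightarrow> 'k) set) set" where
  "rhounder C f m X = rhounder_cyc C f m (pick X) (SOME b. upper_bound f (pick X) b)"

end

theory Submission
  imports Defs
begin

(* The bijectivity statements are proved along the levels a = -n:
   - a tower of window cycles that is coherent up to boundaries is corrected
     to a strictly coherent tower, which glues to a Novikov cycle; this gives
     surjectivity of rho-bar and of rho-under, hence of kappa;
   - injectivity of rho-bar is a Mittag-Leffler argument: the primitives of a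
     cycle in the windows [-n,B] form a tower of affine spaces over finite
     dimensional spaces, so their images stabilise, and a coherent choice of
     primitives glues to a Novikov primitive. *)

locale fun_complex =
  fixes Ch :: "('c \<Rightarrow> 'k::field) set" and d :: "('c \<Rightarrow> 'k) \<Rightarrow> ('c \<Rightarrow> 'k)"
  assumes zero_closed: "0 \<in> Ch"
    and add_closed: "x \<in> Ch \<Longrightarrow> y \<in> Ch \<Longrightarrow> x + y \<in> Ch"
    and scale_closed: "x \<in> Ch \<Longrightarrow> (\<lambda>c. k * x c) \<in> Ch"
    and d_closed: "x \<in> Ch \<Longrightarrow> d x \<in> Ch"
    and d_add: "x \<in> Ch \<Longrightarrow> y \<in> Ch \<Longrightarrow> d (x + y) = d x + d y"
    and d_scale: "x \<in> Ch \<Longrightarrow> d (\<lambda>c. k * x c) = (\<lambda>c. k * d x c)"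
    and d_d: "x \<in> Ch \<Longrightarrow> d (d x) = 0"
begin

lemma uminus_as_scale: "- x = (\<lambda>c. (-1) * x c)" for x :: "'c \<Rightarrow> 'k"
  by (rule ext) simp

lemma diff_closed: "x \<in> Ch \<Longrightarrow> y \<in> Ch \<Longrightarrow> x - y \<in> Ch"
  using add_closed[of x "- y"] scale_closed[of y "-1", folded uminus_as_scale] by simp

lemma d_zero: "d 0 = 0"
  using d_scale[OF zero_closed, of 0] by (simp add: zero_fun_def)

lemma d_diff: "x \<in> Ch \<Longrightarrow> y \<in> Ch \<Longrightarrow> d (x - y) = d x - d y"
  using d_add[of x "- y"] scale_closed[of y "-1", folded uminus_as_scale]
    d_scale[of y "-1", folded uminus_as_scale] by simp

lemma hcls_self: "z \<in> hcls Ch d z"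
  unfolding hcls_def using zero_closed d_zero by force

lemma hcls_eq_of_mem:
  assumes "z \<in> Ch" "z' \<in> hcls Ch d z"
  shows "hcls Ch d z' = hcls Ch d z"
proof -
  obtain y where y: "y \<in> Ch" "z' = z + d y" using assms(2) unfolding hcls_def by auto
  have "w \<in> hcls Ch d z" if w: "w \<in> hcls Ch d z'" for w
  proof -
    obtain y' where "y' \<in> Ch" "w = z' + d y'" using w unfolding hcls_def by auto
    hence "w = z + d (y + y')" using y d_add by (simp add: add.assoc)
    thus ?thesis unfolding hcls_def using add_closed[OF y(1) \<open>y' \<in> Ch\<close>] by auto
  qed
  moreover have "w \<in> hcls Ch d z'" if w: "w \<in> hcls Ch d z" for w
  proof -
    obtain y' where "y' \<in> Ch" "w = z + d y'" using w unfolding hcls_def by auto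
    hence "w = z' + d (y' - y)" using y d_diff by (simp add: algebra_simps)
    thus ?thesis unfolding hcls_def using diff_closed[OF \<open>y' \<in> Ch\<close> y(1)] by auto
  qed
  ultimately show ?thesis by blast
qed

lemma hcls_eq_iff:
  assumes "z \<in> Ch" "z' \<in> Ch"
  shows "hcls Ch d z = hcls Ch d z' \<longleftrightarrow> (\<exists>y\<in>Ch. z = z' + d y)"
proof
  assume "hcls Ch d z = hcls Ch d z'"
  hence "z \<in> hcls Ch d z'" using hcls_self by metis
  thus "\<exists>y\<in>Ch. z = z' + d y" unfolding hcls_def by auto
next
  assume "\<exists>y\<in>Ch. z = z' + d y"
  hence "z \<in> hcls Ch d z'" unfolding hcls_def by auto
  thus "hcls Ch d z = hcls Ch d z'" using hcls_eq_of_mem assms by blast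
qed

lemma pick_hcls: "z \<in> Ch \<Longrightarrow> pick (hcls Ch d z) \<in> hcls Ch d z"
  unfolding pick_def using hcls_self by (metis someI)

lemma pick_hcls_props:
  assumes "z \<in> Ch" "d z = 0"
  shows "pick (hcls Ch d z) \<in> Ch" "d (pick (hcls Ch d z)) = 0"
    "hcls Ch d (pick (hcls Ch d z)) = hcls Ch d z"
proof -
  obtain y where y: "y \<in> Ch" "pick (hcls Ch d z) = z + d y"
    using pick_hcls[OF assms(1)] unfolding hcls_def by auto
  show "pick (hcls Ch d z) \<in> Ch" using y add_closed assms(1) d_closed by simp
  show "d (pick (hcls Ch d z)) = 0" using y assms d_add d_closed d_d by simp
  show "hcls Ch d (pick (hcls Ch d z)) = hcls Ch d z"
    using hcls_eq_of_mem[OF assms(1) pick_hcls[OF assms(1)]] .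
qed

lemma hom_carrier_iff:
  "X \<in> vcarrier (hom_vs Ch d) \<longleftrightarrow> (\<exists>z. z \<in> Ch \<and> d z = 0 \<and> X = hcls Ch d z)"
  unfolding hom_vs_def by auto

lemma hom_vadd:
  assumes "z \<in> Ch" "z' \<in> Ch"
  shows "vadd (hom_vs Ch d) (hcls Ch d z) (hcls Ch d z') = hcls Ch d (z + z')"
proof -
  obtain y where y: "y \<in> Ch" "pick (hcls Ch d z) = z + d y"
    using pick_hcls[OF assms(1)] unfolding hcls_def by auto
  obtain y' where y': "y' \<in> Ch" "pick (hcls Ch d z') = z' + d y'"
    using pick_hcls[OF assms(2)] unfolding hcls_def by auto
  have "pick (hcls Ch d z) + pick (hcls Ch d z') = (z + z') + d (y + y')"
    using y y' d_add by (simp add: algebra_simps)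
  hence "pick (hcls Ch d z) + pick (hcls Ch d z') \<in> hcls Ch d (z + z')"
    unfolding hcls_def using add_closed y(1) y'(1) by blast
  thus ?thesis
    unfolding hom_vs_def using hcls_eq_of_mem[OF add_closed[OF assms]] by simp
qed

lemma hom_vscale:
  assumes "z \<in> Ch"
  shows "vscale (hom_vs Ch d) k (hcls Ch d z) = hcls Ch d (\<lambda>c. k * z c)"
proof -
  obtain y where y: "y \<in> Ch" "pick (hcls Ch d z) = z + d y"
    using pick_hcls[OF assms(1)] unfolding hcls_def by auto
  have "(\<lambda>c. k * pick (hcls Ch d z) c) = (\<lambda>c. k * z c) + d (\<lambda>c. k * y c)"
    using y d_scale[OF y(1)] by (auto simp: algebra_simps)
  hence "(\<lambda>c. k * pick (hcls Ch d z) c) \<in> hcls Ch d (\<lambda>c. k * z c)"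
    unfolding hcls_def using scale_closed[OF y(1)] by blast
  thus ?thesis
    unfolding hom_vs_def using hcls_eq_of_mem[OF scale_closed[OF assms]] by simp
qed

end

lemma hmap_hcls:
  assumes "fun_complex Ch d" "fun_complex Ch' d'"
    and g_closed: "\<And>x. x \<in> Ch \<Longrightarrow> g x \<in> Ch'"
    and g_add: "\<And>x y. x \<in> Ch \<Longrightarrow> y \<in> Ch \<Longrightarrow> g (x + y) = g x + g y"
    and g_d: "\<And>x. x \<in> Ch \<Longrightarrow> g (d x) = d' (g x)"
    and z: "z \<in> Ch"
  shows "hmap Ch' d' g (hcls Ch d z) = hcls Ch' d' (g z)"
proof -
  interpret A: fun_complex Ch d by fact
  interpret B: fun_complex Ch' d' by fact
  obtain y where y: "y \<in> Ch" "pick (hcls Ch d z) = z + d y"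
    using A.pick_hcls[OF z] unfolding hcls_def by auto
  have "g (pick (hcls Ch d z)) = g z + d' (g y)"
    using y g_add[OF z A.d_closed[OF y(1)]] g_d[OF y(1)] by simp
  hence "g (pick (hcls Ch d z)) \<in> hcls Ch' d' (g z)"
    unfolding hcls_def using g_closed[OF y(1)] by blast
  thus ?thesis unfolding hmap_def using B.hcls_eq_of_mem[OF g_closed[OF z]] by simp
qed

section \<open>Direct limits of directed systems of vector spaces\<close>

locale direct_system =
  fixes G :: "real \<Rightarrow> ('v, 'k) vs" and \<iota> :: "real \<Rightarrow> real \<Rightarrow> 'v \<Rightarrow> 'v"
  assumes i_closed: "b1 \<le> b2 \<Longrightarrow> x \<in> vcarrier (G b1) \<Longrightarrow> \<iota> b2 b1 x \<in> vcarrier (G b2)"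
    and i_id: "x \<in> vcarrier (G b) \<Longrightarrow> \<iota> b b x = x"
    and i_comp: "b1 \<le> b2 \<Longrightarrow> b2 \<le> b3 \<Longrightarrow> x \<in> vcarrier (G b1) \<Longrightarrow> \<iota> b3 b2 (\<iota> b2 b1 x) = \<iota> b3 b1 x"
    and i_add: "b1 \<le> b2 \<Longrightarrow> x \<in> vcarrier (G b1) \<Longrightarrow> y \<in> vcarrier (G b1) \<Longrightarrow>
        \<iota> b2 b1 (vadd (G b1) x y) = vadd (G b2) (\<iota> b2 b1 x) (\<iota> b2 b1 y)"
    and i_scale: "b1 \<le> b2 \<Longrightarrow> x \<in> vcarrier (G b1) \<Longrightarrow>
        \<iota> b2 b1 (vscale (G b1) k x) = vscale (G b2) k (\<iota> b2 b1 x)"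
    and add_closed: "x \<in> vcarrier (G b) \<Longrightarrow> y \<in> vcarrier (G b) \<Longrightarrow> vadd (G b) x y \<in> vcarrier (G b)"
    and scale_closed: "x \<in> vcarrier (G b) \<Longrightarrow> vscale (G b) k x \<in> vcarrier (G b)"
begin

text \<open>Two representatives define the same element of the limit iff they become
  equal at some common later stage.\<close>
definition stage_eq :: "real \<Rightarrow> 'v \<Rightarrow> real \<Rightarrow> 'v \<Rightarrow> bool" where
  "stage_eq b x b' x' \<longleftrightarrow> (\<exists>B. b \<le> B \<and> b' \<le> B \<and> \<iota> B b x = \<iota> B b' x')"

lemma stage_eq_push:
  assumes "x \<in> vcarrier (G b)" "x' \<in> vcarrier (G b')" "b \<le> B" "b' \<le> B"
    "\<iota> B b x = \<iota> B b' x'" "B \<le> T"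
  shows "\<iota> T b x = \<iota> T b' x'"
  using assms i_comp by metis

lemma stage_eq_trans:
  assumes "x \<in> vcarrier (G b)" "x' \<in> vcarrier (G b')" "x'' \<in> vcarrier (G b'')"
    "stage_eq b x b' x'" "stage_eq b' x' b'' x''"
  shows "stage_eq b x b'' x''"
proof -
  obtain B1 where B1: "b \<le> B1" "b' \<le> B1" "\<iota> B1 b x = \<iota> B1 b' x'"
    using assms(4) stage_eq_def by auto
  obtain B2 where B2: "b' \<le> B2" "b'' \<le> B2" "\<iota> B2 b' x' = \<iota> B2 b'' x''"
    using assms(5) stage_eq_def by auto
  define T where "T = max B1 B2"
  have "\<iota> T b x = \<iota> T b' x'" using stage_eq_push[OF assms(1,2) B1] T_def by simp
  also have "\<iota> T b' x' = \<iota> T b'' x''" using stage_eq_push[OF assms(2,3) B2] T_def by simp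
  finally show ?thesis unfolding stage_eq_def using B1 B2 T_def by (intro exI[of _ T]) auto
qed

lemma dcls_iff: "(b', x') \<in> dcls G \<iota> b x \<longleftrightarrow> x' \<in> vcarrier (G b') \<and> stage_eq b x b' x'"
  unfolding dcls_def stage_eq_def by auto

lemma dcls_mem: "x \<in> vcarrier (G b) \<Longrightarrow> (b, x) \<in> dcls G \<iota> b x"
  unfolding dcls_iff stage_eq_def by auto

lemma dcls_eq_iff:
  assumes "x \<in> vcarrier (G b)" "x' \<in> vcarrier (G b')"
  shows "dcls G \<iota> b x = dcls G \<iota> b' x' \<longleftrightarrow> stage_eq b x b' x'"
proof
  assume "dcls G \<iota> b x = dcls G \<iota> b' x'"
  hence "(b', x') \<in> dcls G \<iota> b x" using dcls_mem[OF assms(2)] by simp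
  thus "stage_eq b x b' x'" using dcls_iff by auto
next
  assume r: "stage_eq b x b' x'"
  hence r': "stage_eq b' x' b x" unfolding stage_eq_def by metis
  show "dcls G \<iota> b x = dcls G \<iota> b' x'"
  proof (rule set_eqI)
    fix p :: "real \<times> 'v"
    obtain b'' x'' where p: "p = (b'', x'')" by (cases p)
    show "p \<in> dcls G \<iota> b x \<longleftrightarrow> p \<in> dcls G \<iota> b' x'"
      unfolding p dcls_iff using stage_eq_trans[OF assms(2,1) _ r'] stage_eq_trans[OF assms(1,2) _ r]
      by blast
  qed
qed

lemma dcls_eqI:
  assumes "x \<in> vcarrier (G b)" "x' \<in> vcarrier (G b')" "b \<le> B" "b' \<le> B"
    "\<iota> B b x = \<iota> B b' x'"
  shows "dcls G \<iota> b x = dcls G \<iota> b' x'"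
  using dcls_eq_iff[OF assms(1,2)] assms(3-5) stage_eq_def by blast

lemma dcls_push: "x \<in> vcarrier (G b) \<Longrightarrow> b \<le> B \<Longrightarrow> dcls G \<iota> B (\<iota> B b x) = dcls G \<iota> b x"
  by (rule dcls_eqI[of _ _ _ _ B]) (auto simp: i_closed i_id)

lemma pick_dcls:
  assumes "x \<in> vcarrier (G b)"
  obtains b' x' where "pick (dcls G \<iota> b x) = (b', x')" "x' \<in> vcarrier (G b')" "stage_eq b x b' x'"
proof -
  have "pick (dcls G \<iota> b x) \<in> dcls G \<iota> b x"
    unfolding pick_def using dcls_mem[OF assms] by (metis someI)
  thus ?thesis using that dcls_iff by (cases "pick (dcls G \<iota> b x)") auto
qed

lemma dlim_carrier:
  "X \<in> vcarrier (dlim_vs G \<iota>) \<longleftrightarrow> (\<exists>b x. x \<in> vcarrier (G b) \<and> X = dcls G \<iota> b x)"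
  unfolding dlim_vs_def by auto

lemma dlim_vadd:
  assumes x: "x \<in> vcarrier (G b)" and y: "y \<in> vcarrier (G b')" and B: "b \<le> B" "b' \<le> B"
  shows "vadd (dlim_vs G \<iota>) (dcls G \<iota> b x) (dcls G \<iota> b' y) =
         dcls G \<iota> B (vadd (G B) (\<iota> B b x) (\<iota> B b' y))"
proof -
  obtain b1 x1 where p1: "pick (dcls G \<iota> b x) = (b1, x1)" "x1 \<in> vcarrier (G b1)" "stage_eq b x b1 x1"
    using pick_dcls[OF x] by blast
  obtain b2 x2 where p2: "pick (dcls G \<iota> b' y) = (b2, x2)" "x2 \<in> vcarrier (G b2)" "stage_eq b' y b2 x2"
    using pick_dcls[OF y] by blast
  obtain B1 where B1: "b \<le> B1" "b1 \<le> B1" "\<iota> B1 b x = \<iota> B1 b1 x1" using p1(3) stage_eq_def by auto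
  obtain B2 where B2: "b' \<le> B2" "b2 \<le> B2" "\<iota> B2 b' y = \<iota> B2 b2 x2" using p2(3) stage_eq_def by auto
  define M where "M = max b1 b2"
  define T where "T = max (max M B) (max B1 B2)"
  have M: "b1 \<le> M" "b2 \<le> M" and T: "M \<le> T" "B \<le> T" "B1 \<le> T" "B2 \<le> T"
    unfolding M_def T_def by auto
  have ix1: "\<iota> M b1 x1 \<in> vcarrier (G M)" and ix2: "\<iota> M b2 x2 \<in> vcarrier (G M)"
    using i_closed M p1 p2 by auto
  have ix: "\<iota> B b x \<in> vcarrier (G B)" and iy: "\<iota> B b' y \<in> vcarrier (G B)"
    using i_closed B x y by auto
  have "\<iota> T M (vadd (G M) (\<iota> M b1 x1) (\<iota> M b2 x2)) = vadd (G T) (\<iota> T b1 x1) (\<iota> T b2 x2)"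
    using i_add[OF T(1) ix1 ix2] i_comp[OF M(1) T(1) p1(2)] i_comp[OF M(2) T(1) p2(2)] by simp
  also have "\<dots> = vadd (G T) (\<iota> T b x) (\<iota> T b' y)"
    using stage_eq_push[OF x p1(2) B1 T(3)] stage_eq_push[OF y p2(2) B2 T(4)] by simp
  also have "\<dots> = \<iota> T B (vadd (G B) (\<iota> B b x) (\<iota> B b' y))"
    using i_add[OF T(2) ix iy] i_comp[OF B(1) T(2) x] i_comp[OF B(2) T(2) y] by simp
  finally have "dcls G \<iota> M (vadd (G M) (\<iota> M b1 x1) (\<iota> M b2 x2)) =
                dcls G \<iota> B (vadd (G B) (\<iota> B b x) (\<iota> B b' y))"
    by (intro dcls_eqI[OF add_closed[OF ix1 ix2] add_closed[OF ix iy] T(1) T(2)])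
  thus ?thesis unfolding dlim_vs_def using p1(1) p2(1) M_def by simp
qed

lemma dlim_vscale:
  assumes x: "x \<in> vcarrier (G b)"
  shows "vscale (dlim_vs G \<iota>) k (dcls G \<iota> b x) = dcls G \<iota> b (vscale (G b) k x)"
proof -
  obtain b1 x1 where p1: "pick (dcls G \<iota> b x) = (b1, x1)" "x1 \<in> vcarrier (G b1)" "stage_eq b x b1 x1"
    using pick_dcls[OF x] by blast
  obtain B1 where B1: "b \<le> B1" "b1 \<le> B1" "\<iota> B1 b x = \<iota> B1 b1 x1" using p1(3) stage_eq_def by auto
  have "\<iota> B1 b1 (vscale (G b1) k x1) = \<iota> B1 b (vscale (G b) k x)"
    using i_scale[OF B1(1) x] i_scale[OF B1(2) p1(2)] B1(3) by simp
  hence "dcls G \<iota> b1 (vscale (G b1) k x1) = dcls G \<iota> b (vscale (G b) k x)"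
    by (intro dcls_eqI[OF scale_closed[OF p1(2)] scale_closed[OF x] B1(2) B1(1)])
  thus ?thesis unfolding dlim_vs_def using p1(1) by simp
qed

end

lemma dlim_map_dcls:
  assumes "direct_system G \<iota>" "direct_system G' \<iota>'"
    and h_closed: "\<And>b x. x \<in> vcarrier (G b) \<Longrightarrow> h b x \<in> vcarrier (G' b)"
    and h_comm: "\<And>b1 b2 x. b1 \<le> b2 \<Longrightarrow> x \<in> vcarrier (G b1) \<Longrightarrow> h b2 (\<iota> b2 b1 x) = \<iota>' b2 b1 (h b1 x)"
    and x: "x \<in> vcarrier (G b)"
  shows "dlim_map G' \<iota>' h (dcls G \<iota> b x) = dcls G' \<iota>' b (h b x)"
proof -
  interpret A: direct_system G \<iota> by fact
  interpret B: direct_system G' \<iota>' by fact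
  obtain b1 x1 where p1: "pick (dcls G \<iota> b x) = (b1, x1)" "x1 \<in> vcarrier (G b1)" "A.stage_eq b x b1 x1"
    using A.pick_dcls[OF x] by blast
  obtain B1 where B1: "b \<le> B1" "b1 \<le> B1" "\<iota> B1 b x = \<iota> B1 b1 x1" using p1(3) A.stage_eq_def by auto
  have "\<iota>' B1 b1 (h b1 x1) = \<iota>' B1 b (h b x)"
    using h_comm[OF B1(1) x] h_comm[OF B1(2) p1(2)] B1(3) by simp
  hence "dcls G' \<iota>' b1 (h b1 x1) = dcls G' \<iota>' b (h b x)"
    by (intro B.dcls_eqI[OF h_closed[OF p1(2)] h_closed[OF x] B1(2) B1(1)])
  thus ?thesis unfolding dlim_map_def using p1(1) by simp
qed

lemma lin_map_factor:
  assumes "lin_map V W \<phi>" "lin_map W U \<psi>" "\<And>x. x \<in> vcarrier V \<Longrightarrow> \<chi> x = \<psi> (\<phi> x)"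
    and "\<And>x y. x \<in> vcarrier V \<Longrightarrow> y \<in> vcarrier V \<Longrightarrow> vadd V x y \<in> vcarrier V"
    and "\<And>x k. x \<in> vcarrier V \<Longrightarrow> vscale V k x \<in> vcarrier V"
  shows "lin_map V U \<chi>"
  using assms unfolding lin_map_def by simp

lemma coherent_sequence_exists:
  assumes ne: "\<exists>t. t \<in> T 0"
    and lift: "\<And>n t. t \<in> T n \<Longrightarrow> \<exists>t'\<in>T (Suc n). r n t' = t"
  shows "\<exists>s. \<forall>n. s n \<in> T n \<and> r n (s (Suc n)) = s n"
proof -
  define s where "s = rec_nat (SOME t. t \<in> T 0) (\<lambda>n t. SOME t'. t' \<in> T (Suc n) \<and> r n t' = t)"
  have s0: "s 0 = (SOME t. t \<in> T 0)"
    and sS: "s (Suc n) = (SOME t'. t' \<in> T (Suc n) \<and> r n t' = s n)" for n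
    unfolding s_def by simp_all
  have s_in: "s n \<in> T n" for n
  proof (induction n)
    case 0 show ?case unfolding s0 using ne by (metis someI)
  next
    case (Suc n) show ?case unfolding sS using someI_ex[OF lift[OF Suc, unfolded Bex_def]] by blast
  qed
  have "r n (s (Suc n)) = s n" for n
    unfolding sS using someI_ex[OF lift[OF s_in, unfolded Bex_def]] by blast
  thus ?thesis using s_in by blast
qed

definition fscale :: "'b::field \<Rightarrow> ('a \<Rightarrow> 'b) \<Rightarrow> ('a \<Rightarrow> 'b)" where
  "fscale k x = (\<lambda>c. k * x c)"

interpretation fvs: vector_space "fscale :: 'b::field \<Rightarrow> ('a \<Rightarrow> 'b) \<Rightarrow> ('a \<Rightarrow> 'b)"
  by unfold_locales (auto simp: fscale_def algebra_simps intro!: ext)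

lemma subspace_eq_of_dim_le:
  fixes U V W :: "('a \<Rightarrow> 'b::field) set"
  assumes U: "fvs.subspace U" and UV: "U \<subseteq> V"
    and W: "finite W" "V \<subseteq> fvs.span W" and dim_le: "fvs.dim V \<le> fvs.dim U"
  shows "U = V"
proof (rule ccontr)
  assume "U \<noteq> V"
  then obtain v where v: "v \<in> V" "v \<notin> U" using UV by blast
  obtain B where B: "B \<subseteq> U" "fvs.independent B" "U \<subseteq> fvs.span B" "card B = fvs.dim U"
    using fvs.basis_exists by blast
  obtain B' where B': "B' \<subseteq> V" "fvs.independent B'" "V \<subseteq> fvs.span B'" "card B' = fvs.dim V"
    using fvs.basis_exists by blast
  have finB: "finite B" using fvs.independent_span_bound[OF W(1) B(2)] B(1) UV W(2) by blast
  have finB': "finite B'" using fvs.independent_span_bound[OF W(1) B'(2)] B'(1) W(2) by blast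
  have "v \<notin> fvs.span B" using fvs.span_minimal[OF B(1) U] v(2) by blast
  hence ind: "fvs.independent (insert v B)" using fvs.independent_insertI B(2) by blast
  have "insert v B \<subseteq> fvs.span B'" using B'(3) v(1) B(1) UV by blast
  hence "card (insert v B) \<le> card B'" using fvs.independent_span_bound[OF finB' ind] by blast
  moreover have "card (insert v B) = Suc (card B)"
    using finB v(2) B(1) by (metis card_insert_disjoint subsetD)
  ultimately show False using B(4) B'(4) dim_le by simp
qed

lemma descending_subspaces_stabilise:
  fixes V :: "nat \<Rightarrow> ('a \<Rightarrow> 'b::field) set"
  assumes sub: "\<And>k. fvs.subspace (V k)" and desc: "\<And>k. V (Suc k) \<subseteq> V k"
    and W: "finite W" "\<And>k. V k \<subseteq> fvs.span W"
  shows "\<exists>K. \<forall>k\<ge>K. V k = V K"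
proof -
  obtain K where K: "fvs.dim (V K) = (LEAST x. x \<in> range (\<lambda>k. fvs.dim (V k)))"
    using LeastI[of "\<lambda>x. x \<in> range (\<lambda>k. fvs.dim (V k))" "fvs.dim (V 0)"] by auto
  have K_min: "fvs.dim (V K) \<le> fvs.dim (V k)" for k unfolding K by (rule Least_le) simp
  have "V k = V K" if "k \<ge> K" for k
    by (rule subspace_eq_of_dim_le[OF sub lift_Suc_antimono_le[of V, OF desc that] W(1) W(2)])
       (rule K_min)
  thus ?thesis by blast
qed

definition delta :: "'a \<Rightarrow> 'a \<Rightarrow> 'b::field" where "delta c = (\<lambda>x. if x = c then 1 else 0)"

lemma sum_fun_apply: "finite A \<Longrightarrow> (\<Sum>a\<in>A. g a) x = (\<Sum>a\<in>A. g a x)"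
  for g :: "'a \<Rightarrow> 'b \<Rightarrow> 'c::comm_monoid_add"
  by (induction A rule: finite_induct) auto

lemma finite_support_in_span:
  fixes x :: "'a \<Rightarrow> 'b::field"
  assumes "finite F" "\<And>c. x c \<noteq> 0 \<Longrightarrow> c \<in> F"
  shows "x \<in> fvs.span (delta ` F)"
proof -
  have "x = (\<Sum>c\<in>F. fscale (x c) (delta c))"
  proof (rule ext)
    fix t
    have "(\<Sum>c\<in>F. fscale (x c) (delta c)) t = (\<Sum>c\<in>F. x c * delta c t)"
      unfolding fscale_def by (rule sum_fun_apply[OF assms(1)])
    also have "\<dots> = (if t \<in> F then x t else 0)"
      unfolding delta_def by (simp add: if_distrib cong: if_cong) (simp add: assms(1))
    also have "\<dots> = x t" using assms(2) by auto
    finally show "x t = (\<Sum>c\<in>F. fscale (x c) (delta c)) t" by simp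
  qed
  also have "\<dots> \<in> fvs.span (delta ` F)"
    by (rule fvs.span_sum) (auto intro: fvs.span_scale fvs.span_base)
  finally show ?thesis .
qed

section \<open>The Novikov complex of a Floer triple\<close>

locale floer =
  fixes C :: "'c set" and f :: "'c \<Rightarrow> real" and m :: "'c \<Rightarrow> 'c \<Rightarrow> 'k::field"
  assumes ft: "floer_triple C f m"
begin

abbreviation \<Lambda> :: "('c \<Rightarrow> 'k) set" where "\<Lambda> \<equiv> Nov C f"
abbreviation dN :: "('c \<Rightarrow> 'k) \<Rightarrow> ('c \<Rightarrow> 'k)" where "dN \<equiv> dNov C m"

lemma finite_Cab: "finite (Cab C f a b)"
proof (cases "a \<le> b")
  case True thus ?thesis using ft unfolding floer_triple_def by auto
next
  case False hence "Cab C f a b = {}" unfolding Cab_def by auto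
  thus ?thesis by simp
qed

lemma m_increases: "c1 \<in> C \<Longrightarrow> c2 \<in> C \<Longrightarrow> m c1 c2 \<noteq> 0 \<Longrightarrow> f c1 < f c2"
  using ft unfolding floer_triple_def by auto

lemma m_square_zero:
  "c1 \<in> C \<Longrightarrow> c3 \<in> C \<Longrightarrow> (\<Sum>c2\<in>{c2\<in>C. m c1 c2 * m c2 c3 \<noteq> 0}. m c1 c2 * m c2 c3) = 0"
  using ft unfolding floer_triple_def by auto

lemma m_square_zero_window:
  assumes c'': "c'' \<in> C" and c: "c \<in> C" "f c \<le> M"
  shows "(\<Sum>c'\<in>Cab C f (f c'') M. m c'' c' * m c' c) = 0"
proof -
  have "(\<Sum>c'\<in>Cab C f (f c'') M. m c'' c' * m c' c) =
        (\<Sum>c'\<in>{c2\<in>C. m c'' c2 * m c2 c \<noteq> 0}. m c'' c' * m c' c)"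
  proof (rule sum.mono_neutral_right[OF finite_Cab])
    show "{c2 \<in> C. m c'' c2 * m c2 c \<noteq> 0} \<subseteq> Cab C f (f c'') M"
      using m_increases[OF c''] m_increases[OF _ c(1)] c(2) unfolding Cab_def by force
  qed (auto simp: Cab_def)
  also have "\<dots> = 0" using m_square_zero[OF c'' c(1)] .
  finally show ?thesis .
qed

lemma nov_supp: "x \<in> \<Lambda> \<Longrightarrow> x c \<noteq> 0 \<Longrightarrow> c \<in> C"
  unfolding Nov_def by auto

lemma nov_fin: "x \<in> \<Lambda> \<Longrightarrow> finite {c. x c \<noteq> 0 \<and> t < f c}"
  unfolding Nov_def by auto

lemma nov_bounded: assumes "x \<in> \<Lambda>" shows "\<exists>b. upper_bound f x b"
proof -
  define S where "S = {c. x c \<noteq> 0 \<and> 0 < f c}"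
  have fin: "finite S" using nov_fin[OF assms] S_def by simp
  have "upper_bound f x (Max (insert 0 (f ` S)))" unfolding upper_bound_def
  proof (intro allI impI)
    fix c assume "x c \<noteq> 0"
    show "f c \<le> Max (insert 0 (f ` S))"
    proof (cases "0 < f c")
      case True hence "c \<in> S" using \<open>x c \<noteq> 0\<close> S_def by auto
      thus ?thesis using fin by (intro Max_ge) auto
    next
      case False thus ?thesis using fin by (meson Max_ge finite_imageI finite_insert insertI1 not_less order_trans)
    qed
  qed
  thus ?thesis by blast
qed

lemma bound_mono: "upper_bound f x b \<Longrightarrow> b \<le> B \<Longrightarrow> upper_bound f x B"
  unfolding upper_bound_def by force

lemma nov_zero: "0 \<in> \<Lambda>"
  unfolding Nov_def by simp

lemma nov_add: assumes "x \<in> \<Lambda>" "y \<in> \<Lambda>" shows "x + y \<in> \<Lambda>"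
proof -
  have "{c. (x + y) c \<noteq> 0 \<and> t < f c} \<subseteq> {c. x c \<noteq> 0 \<and> t < f c} \<union> {c. y c \<noteq> 0 \<and> t < f c}" for t
    by auto
  hence "finite {c. (x + y) c \<noteq> 0 \<and> t < f c}" for t
    using nov_fin[OF assms(1)] nov_fin[OF assms(2)] by (meson finite_UnI finite_subset)
  moreover have "(x + y) c \<noteq> 0 \<Longrightarrow> c \<in> C" for c
    using nov_supp[OF assms(1)] nov_supp[OF assms(2)] by (metis add.right_neutral plus_fun_apply)
  ultimately show ?thesis unfolding Nov_def by blast
qed

lemma nov_scale: assumes "x \<in> \<Lambda>" shows "(\<lambda>c. k * x c) \<in> \<Lambda>"
proof -
  have "finite {c. k * x c \<noteq> 0 \<and> t < f c}" for t
    by (rule finite_subset[OF _ nov_fin[OF assms]]) auto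
  moreover have "k * x c \<noteq> 0 \<Longrightarrow> c \<in> C" for c
    using nov_supp[OF assms(1)] by fastforce
  ultimately show ?thesis unfolding Nov_def by blast
qed

lemma CM_nov: assumes "x \<in> CM C f a b" shows "x \<in> \<Lambda>"
proof -
  have "{c. x c \<noteq> 0 \<and> t < f c} \<subseteq> Cab C f a b" for t using assms unfolding CM_def by auto
  hence "finite {c. x c \<noteq> 0 \<and> t < f c}" for t using finite_Cab finite_subset by blast
  moreover have "x c \<noteq> 0 \<Longrightarrow> c \<in> C" for c using assms unfolding CM_def Cab_def by auto
  ultimately show ?thesis unfolding Nov_def by blast
qed

lemma dN_as_sum:
  assumes "c' \<in> C" "finite F" "F \<subseteq> C" "{c\<in>C. x c \<noteq> 0 \<and> m c' c \<noteq> 0} \<subseteq> F"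
  shows "dN x c' = (\<Sum>c\<in>F. x c * m c' c)"
proof -
  have "dN x c' = (\<Sum>c\<in>{c\<in>C. x c * m c' c \<noteq> 0}. x c * m c' c)"
    unfolding dNov_def using assms(1) by simp
  also have "\<dots> = (\<Sum>c\<in>F. x c * m c' c)"
    by (rule sum.mono_neutral_left[OF assms(2)]) (use assms(3,4) in auto)
  finally show ?thesis .
qed

lemma dN_outside: "c' \<notin> C \<Longrightarrow> dN x c' = 0"
  unfolding dNov_def by simp

text \<open>The support of \<open>x\<close> strictly above level \<open>t\<close>; by the action filtration only
  these coefficients of \<open>x\<close> enter \<open>dN x c'\<close> for \<open>f c' = t\<close>.\<close>
definition supp_above :: "('c \<Rightarrow> 'k) \<Rightarrow> real \<Rightarrow> 'c set" where
  "supp_above x t = {c\<in>C. x c \<noteq> 0 \<and> t < f c}"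

lemma finite_supp_above: "x \<in> \<Lambda> \<Longrightarrow> finite (supp_above x t)"
  by (rule finite_subset[OF _ nov_fin]) (auto simp: supp_above_def)

lemma dN_as_sum_above:
  assumes "c' \<in> C" "finite F" "supp_above x (f c') \<subseteq> F" "F \<subseteq> C"
  shows "dN x c' = (\<Sum>c\<in>F. x c * m c' c)"
  by (rule dN_as_sum[OF assms(1,2,4)]) (use assms(3) in \<open>auto simp: supp_above_def dest: m_increases[OF assms(1)]\<close>)

lemma dN_local:
  assumes "x \<in> \<Lambda>" "y \<in> \<Lambda>" "\<And>c. f c' < f c \<Longrightarrow> x c = y c"
  shows "dN x c' = dN y c'"
proof (cases "c' \<in> C")
  case True
  define F where "F = supp_above x (f c') \<union> supp_above y (f c')"
  have F: "finite F" "F \<subseteq> C" unfolding F_def using finite_supp_above assms by (auto simp: supp_above_def)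
  have "dN x c' = (\<Sum>c\<in>F. x c * m c' c)" by (rule dN_as_sum_above[OF True F(1) _ F(2)]) (simp add: F_def)
  also have "\<dots> = (\<Sum>c\<in>F. y c * m c' c)" by (rule sum.cong) (auto simp: F_def supp_above_def assms(3))
  also have "\<dots> = dN y c'" by (rule dN_as_sum_above[OF True F(1) _ F(2), symmetric]) (simp add: F_def)
  finally show ?thesis .
qed (simp add: dN_outside)

lemma dN_add: assumes "x \<in> \<Lambda>" "y \<in> \<Lambda>" shows "dN (x + y) = dN x + dN y"
proof (rule ext)
  fix c'
  show "dN (x + y) c' = (dN x + dN y) c'"
  proof (cases "c' \<in> C")
    case True
    define F where "F = supp_above x (f c') \<union> supp_above y (f c')"
    have F: "finite F" "F \<subseteq> C" unfolding F_def using finite_supp_above assms by (auto simp: supp_above_def)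
    have "supp_above (x + y) (f c') \<subseteq> F" by (auto simp: F_def supp_above_def)
    thus ?thesis
      using dN_as_sum_above[OF True F(1) _ F(2), of x] dN_as_sum_above[OF True F(1) _ F(2), of y]
        dN_as_sum_above[OF True F(1) _ F(2), of "x + y"]
      by (simp add: F_def sum.distrib distrib_right)
  qed (simp add: dN_outside)
qed

lemma dN_scale: assumes "x \<in> \<Lambda>" shows "dN (\<lambda>c. k * x c) = (\<lambda>c. k * dN x c)"
proof (rule ext)
  fix c'
  show "dN (\<lambda>c. k * x c) c' = k * dN x c'"
  proof (cases "c' \<in> C")
    case True
    have F: "finite (supp_above x (f c'))" "supp_above x (f c') \<subseteq> C"
      using finite_supp_above assms by (auto simp: supp_above_def)
    have "supp_above (\<lambda>c. k * x c) (f c') \<subseteq> supp_above x (f c')" by (auto simp: supp_above_def)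
    thus ?thesis
      using dN_as_sum_above[OF True F(1) _ F(2), of x] dN_as_sum_above[OF True F(1) _ F(2), of "\<lambda>c. k * x c"]
      by (simp add: sum_distrib_left mult.assoc)
  qed (simp add: dN_outside)
qed

lemma dN_nonzero: assumes "dN x c' \<noteq> 0" shows "c' \<in> C" "\<exists>c\<in>C. x c \<noteq> 0 \<and> m c' c \<noteq> 0"
proof -
  show c': "c' \<in> C" using assms dN_outside by blast
  have "(\<Sum>c\<in>{c\<in>C. x c * m c' c \<noteq> 0}. x c * m c' c) \<noteq> 0" using assms c' unfolding dNov_def by simp
  then obtain c where "c \<in> {c\<in>C. x c * m c' c \<noteq> 0}" using sum.neutral by (metis (no_types, lifting))
  thus "\<exists>c\<in>C. x c \<noteq> 0 \<and> m c' c \<noteq> 0" by auto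
qed

lemma dN_bound: assumes "upper_bound f x b" shows "upper_bound f (dN x) b"
  unfolding upper_bound_def
proof (intro allI impI)
  fix c' assume nz: "dN x c' \<noteq> 0"
  obtain c where c: "c \<in> C" "x c \<noteq> 0" "m c' c \<noteq> 0" using dN_nonzero[OF nz] by blast
  have "f c' < f c" using m_increases[OF dN_nonzero(1)[OF nz] c(1) c(3)] .
  moreover have "f c \<le> b" using assms c(2) unfolding upper_bound_def by auto
  ultimately show "f c' \<le> b" by simp
qed

lemma dN_nov: assumes "x \<in> \<Lambda>" shows "dN x \<in> \<Lambda>"
proof -
  obtain b where b: "upper_bound f x b" using nov_bounded[OF assms] by blast
  have "{c'. dN x c' \<noteq> 0 \<and> t < f c'} \<subseteq> Cab C f t b" for t
    using dN_bound[OF b] dN_nonzero(1) unfolding upper_bound_def Cab_def by fastforce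
  hence "finite {c'. dN x c' \<noteq> 0 \<and> t < f c'}" for t using finite_Cab finite_subset by blast
  moreover have "dN x c \<noteq> 0 \<Longrightarrow> c \<in> C" for c using dN_nonzero(1) by blast
  ultimately show ?thesis unfolding Nov_def by blast
qed

text \<open>\<open>dN \<circ> dN = 0\<close>: after exchanging the two finite sums this is \<open>m \<cdot> m = 0\<close>.\<close>
lemma dN_dN: assumes x: "x \<in> \<Lambda>" shows "dN (dN x) = 0"
proof (rule ext)
  fix c''
  show "dN (dN x) c'' = 0 c''"
  proof (cases "c'' \<in> C")
    case True
    obtain M where M: "upper_bound f x M" using nov_bounded[OF x] by blast
    define F1 where "F1 = Cab C f (f c'') M"
    define F2 where "F2 = supp_above x (f c'')"
    have F1: "finite F1" "F1 \<subseteq> C" unfolding F1_def using finite_Cab by (auto simp: Cab_def)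
    have F2: "finite F2" "F2 \<subseteq> C" unfolding F2_def using finite_supp_above[OF x] by (auto simp: supp_above_def)
    have inner: "dN x c' = (\<Sum>c\<in>F2. x c * m c' c)" if "c' \<in> F1" for c'
      using that by (intro dN_as_sum_above[OF _ F2(1) _ F2(2)]) (auto simp: F1_def F2_def Cab_def supp_above_def)
    have outer_supp: "supp_above (dN x) (f c'') \<subseteq> F1"
      using dN_bound[OF M] dN_nonzero(1) unfolding F1_def Cab_def supp_above_def upper_bound_def by fastforce
    have "dN (dN x) c'' = (\<Sum>c'\<in>F1. dN x c' * m c'' c')"
      by (rule dN_as_sum_above[OF True F1(1) outer_supp F1(2)])
    also have "\<dots> = (\<Sum>c'\<in>F1. \<Sum>c\<in>F2. x c * (m c'' c' * m c' c))"
      by (simp add: inner sum_distrib_left mult_ac)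
    also have "\<dots> = (\<Sum>c\<in>F2. x c * (\<Sum>c'\<in>F1. m c'' c' * m c' c))"
      by (subst sum.swap) (simp add: sum_distrib_left)
    also have "\<dots> = 0"
      using m_square_zero_window[OF True] M F2(2) unfolding F1_def F2_def supp_above_def upper_bound_def
      by (intro sum.neutral) auto
    finally show ?thesis by simp
  qed (simp add: dN_outside)
qed

lemma nov_complex: "fun_complex \<Lambda> dN"
  by unfold_locales (auto simp: nov_zero nov_add nov_scale dN_nov dN_add dN_scale dN_dN)

lemma nov_hcls_eq_iff: "\<xi> \<in> \<Lambda> \<Longrightarrow> \<xi>' \<in> \<Lambda> \<Longrightarrow>
    hcls \<Lambda> dN \<xi> = hcls \<Lambda> dN \<xi>' \<longleftrightarrow> (\<exists>y\<in>\<Lambda>. \<xi> = \<xi>' + dN y)"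
  by (rule fun_complex.hcls_eq_iff[OF nov_complex])

lemma HMnov_carrier:
  "X \<in> vcarrier (HMnov C f m) \<longleftrightarrow> (\<exists>\<xi>. \<xi> \<in> \<Lambda> \<and> dN \<xi> = 0 \<and> X = hcls \<Lambda> dN \<xi>)"
  unfolding HMnov_def by (rule fun_complex.hom_carrier_iff[OF nov_complex])

end

context floer begin

definition above :: "real \<Rightarrow> ('c \<Rightarrow> 'k) \<Rightarrow> ('c \<Rightarrow> 'k)" where
  "above a x = (\<lambda>c. if a \<le> f c then x c else 0)"

abbreviation CMw :: "real \<Rightarrow> real \<Rightarrow> ('c \<Rightarrow> 'k) set" where "CMw a b \<equiv> CM C f a b"
abbreviation dW :: "real \<Rightarrow> real \<Rightarrow> ('c \<Rightarrow> 'k) \<Rightarrow> ('c \<Rightarrow> 'k)" where "dW a b \<equiv> dCM C f m a b"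
abbreviation hc :: "real \<Rightarrow> real \<Rightarrow> ('c \<Rightarrow> 'k) \<Rightarrow> ('c \<Rightarrow> 'k) set" where
  "hc a b z \<equiv> hcls (CMw a b) (dW a b) z"
abbreviation HM :: "real \<Rightarrow> real \<Rightarrow> (('c \<Rightarrow> 'k) set, 'k) vs" where "HM a b \<equiv> HMab C f m a b"
abbreviation HP :: "real \<Rightarrow> real \<Rightarrow> real \<Rightarrow> ('c \<Rightarrow> 'k) set \<Rightarrow> ('c \<Rightarrow> 'k) set" where
  "HP b a2 a1 \<equiv> Hp C f m b a2 a1"
abbreviation HI :: "real \<Rightarrow> real \<Rightarrow> real \<Rightarrow> ('c \<Rightarrow> 'k) set \<Rightarrow> ('c \<Rightarrow> 'k) set" where
  "HI a b2 b1 \<equiv> Hi C f m a b2 b1"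

lemma CM_iff: "x \<in> CMw a b \<longleftrightarrow> (\<forall>c. x c \<noteq> 0 \<longrightarrow> c \<in> C \<and> a \<le> f c \<and> f c \<le> b)"
  unfolding CM_def Cab_def by auto

lemma CM_zero: "0 \<in> CMw a b" by (simp add: CM_iff)

lemma CM_add: "x \<in> CMw a b \<Longrightarrow> y \<in> CMw a b \<Longrightarrow> x + y \<in> CMw a b"
  unfolding CM_iff by (metis add.right_neutral plus_fun_apply)

lemma CM_scale: "x \<in> CMw a b \<Longrightarrow> (\<lambda>c. k * x c) \<in> CMw a b"
  unfolding CM_iff by auto

lemma CM_diff: "x \<in> CMw a b \<Longrightarrow> y \<in> CMw a b \<Longrightarrow> x - y \<in> CMw a b"
  unfolding CM_iff by (metis diff_zero minus_apply)

lemma CM_mono: "a' \<le> a \<Longrightarrow> b \<le> b' \<Longrightarrow> x \<in> CMw a b \<Longrightarrow> x \<in> CMw a' b'"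
  unfolding CM_iff by force

lemma CM_bound: "x \<in> CMw a b \<Longrightarrow> upper_bound f x b"
  unfolding CM_iff upper_bound_def by auto

lemma trunc_CM: "x \<in> \<Lambda> \<Longrightarrow> trunc f a b x \<in> CMw a b"
  unfolding CM_iff trunc_def by (auto dest: nov_supp)

lemma above_CM: "a1 \<le> a2 \<Longrightarrow> x \<in> CMw a1 b \<Longrightarrow> above a2 x \<in> CMw a2 b"
  unfolding CM_iff above_def by auto

lemma above_nov: assumes "x \<in> \<Lambda>" shows "above a x \<in> \<Lambda>"
proof -
  have "finite {c. above a x c \<noteq> 0 \<and> t < f c}" for t
    by (rule finite_subset[OF _ nov_fin[OF assms]]) (auto simp: above_def)
  moreover have "above a x c \<noteq> 0 \<Longrightarrow> c \<in> C" for c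
    using nov_supp[OF assms] unfolding above_def by (metis (full_types))
  ultimately show ?thesis unfolding Nov_def by blast
qed

lemma above_add: "above a (x + y) = above a x + above a y"
  unfolding above_def by (auto intro!: ext)

lemma above_scale: "above a (\<lambda>c. k * x c) = (\<lambda>c. k * above a x c)"
  unfolding above_def by (auto intro!: ext)

lemma above_diff: "above a (x - y) = above a x - above a y"
  unfolding above_def by (auto intro!: ext)

lemma above_zero: "above a 0 = 0"
  unfolding above_def by (auto intro!: ext)

lemma above_above: "a1 \<le> a2 \<Longrightarrow> above a2 (above a1 x) = above a2 x"
  unfolding above_def by (auto intro!: ext)

lemma above_id: "x \<in> CMw a b \<Longrightarrow> a' \<le> a \<Longrightarrow> above a' x = x"
  unfolding above_def CM_iff by (force intro!: ext)

lemma above_trunc: "a1 \<le> a2 \<Longrightarrow> above a2 (trunc f a1 b x) = trunc f a2 b x"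
  unfolding above_def trunc_def by (auto intro!: ext)

lemma trunc_eq_above: "upper_bound f x b \<Longrightarrow> trunc f a b x = above a x"
  unfolding trunc_def above_def upper_bound_def by (force intro!: ext)

lemma trunc_add: "trunc f a b (x + y) = trunc f a b x + trunc f a b y"
  unfolding trunc_def by (auto intro!: ext)

lemma trunc_scale: "trunc f a b (\<lambda>c. k * x c) = (\<lambda>c. k * trunc f a b x c)"
  unfolding trunc_def by (auto intro!: ext)

lemma trunc_diff: "trunc f a b (x - y) = trunc f a b x - trunc f a b y"
  unfolding trunc_def by (auto intro!: ext)

lemma trunc_bound_eq: "upper_bound f x b \<Longrightarrow> b \<le> B \<Longrightarrow> trunc f a B x = trunc f a b x"
  unfolding trunc_def upper_bound_def by (auto intro!: ext)

lemma dW_eq: assumes x: "x \<in> CMw a b" shows "dW a b x = trunc f a b (dN x)"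
proof (rule ext)
  fix c'
  show "dW a b x c' = trunc f a b (dN x) c'"
  proof (cases "c' \<in> Cab C f a b")
    case True
    hence c': "c' \<in> C" "a \<le> f c'" "f c' \<le> b" unfolding Cab_def by auto
    have "dN x c' = (\<Sum>c\<in>Cab C f a b. x c * m c' c)"
      by (rule dN_as_sum[OF c'(1) finite_Cab]) (use x in \<open>auto simp: CM_def Cab_def\<close>)
    thus ?thesis using True c' unfolding dCM_def trunc_def by (simp add: mult.commute)
  next
    case False
    thus ?thesis unfolding dCM_def trunc_def Cab_def by (auto simp: dN_outside)
  qed
qed

lemma dW_trunc: assumes "x \<in> \<Lambda>" "upper_bound f x b"
  shows "dW a b (trunc f a b x) = trunc f a b (dN x)"
proof -
  have local: "dN (trunc f a b x) c = dN x c" if "a \<le> f c" for c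
    by (rule dN_local[OF CM_nov[OF trunc_CM[OF assms(1)]] assms(1)])
       (use assms that in \<open>auto simp: trunc_def upper_bound_def\<close>)
  have "dW a b (trunc f a b x) = trunc f a b (dN (trunc f a b x))"
    by (rule dW_eq[OF trunc_CM[OF assms(1)]])
  also have "\<dots> = trunc f a b (dN x)" using local by (auto simp: trunc_def intro!: ext)
  finally show ?thesis .
qed

lemma window_complex: "fun_complex (CMw a b) (dW a b)"
proof
  show "0 \<in> CMw a b" by (rule CM_zero)
  show "\<And>x y. x \<in> CMw a b \<Longrightarrow> y \<in> CMw a b \<Longrightarrow> x + y \<in> CMw a b" by (rule CM_add)
  show "\<And>x k. x \<in> CMw a b \<Longrightarrow> (\<lambda>c. k * x c) \<in> CMw a b" by (rule CM_scale)
  show "\<And>x. x \<in> CMw a b \<Longrightarrow> dW a b x \<in> CMw a b"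
    by (simp add: dW_eq trunc_CM dN_nov CM_nov)
  show "\<And>x y. x \<in> CMw a b \<Longrightarrow> y \<in> CMw a b \<Longrightarrow> dW a b (x + y) = dW a b x + dW a b y"
    by (simp add: dW_eq CM_add dN_add CM_nov trunc_add)
  show "\<And>x k. x \<in> CMw a b \<Longrightarrow> dW a b (\<lambda>c. k * x c) = (\<lambda>c. k * dW a b x c)"
    by (simp add: dW_eq CM_scale dN_scale CM_nov trunc_scale)
  show "dW a b (dW a b x) = 0" if x: "x \<in> CMw a b" for x
  proof -
    have "dW a b (dW a b x) = trunc f a b (dN (dN x))"
      unfolding dW_eq[OF x] by (rule dW_trunc[OF dN_nov[OF CM_nov[OF x]] dN_bound[OF CM_bound[OF x]]])
    thus ?thesis using dN_dN[OF CM_nov[OF x]] by (simp add: trunc_def zero_fun_def)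
  qed
qed

lemma above_dW: assumes "a1 \<le> a2" "x \<in> CMw a1 b"
  shows "above a2 (dW a1 b x) = dW a2 b (above a2 x)"
proof -
  have "dN (above a2 x) c = dN x c" if "a2 \<le> f c" for c
    by (rule dN_local[OF above_nov[OF CM_nov[OF assms(2)]] CM_nov[OF assms(2)]])
       (use that in \<open>auto simp: above_def\<close>)
  hence "trunc f a2 b (dN (above a2 x)) = trunc f a2 b (dN x)"
    unfolding trunc_def by (auto intro!: ext)
  thus ?thesis using dW_eq[OF assms(2)] dW_eq[OF above_CM[OF assms]] above_trunc[OF assms(1)] by simp
qed

lemma dW_up: assumes "b1 \<le> b2" "x \<in> CMw a b1" shows "dW a b1 x = dW a b2 x"
  using dW_eq[OF assms(2)] dW_eq[OF CM_mono[OF order_refl assms]]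
    trunc_bound_eq[OF dN_bound[OF CM_bound[OF assms(2)]] assms(1)] by simp

lemma cycle_above: "a1 \<le> a2 \<Longrightarrow> z \<in> CMw a1 b \<Longrightarrow> dW a1 b z = 0 \<Longrightarrow> dW a2 b (above a2 z) = 0"
  using above_dW[of a1 a2 z b] by (simp add: above_zero)

lemma cycle_up: "b1 \<le> b2 \<Longrightarrow> z \<in> CMw a b1 \<Longrightarrow> dW a b1 z = 0 \<Longrightarrow> dW a b2 z = 0"
  using dW_up by metis

lemma HP_hc: assumes "a1 \<le> a2" "z \<in> CMw a1 b"
  shows "HP b a2 a1 (hc a1 b z) = hc a2 b (above a2 z)"
proof -
  have "(\<lambda>x c. if a2 \<le> f c then x c else 0) = above a2" unfolding above_def by (auto intro!: ext)
  thus ?thesis unfolding Hp_def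
    by (simp, intro hmap_hcls[OF window_complex window_complex])
       (auto simp: assms above_CM[OF assms(1)] above_add above_dW[OF assms(1)])
qed

lemma HI_hc: assumes "b1 \<le> b2" "z \<in> CMw a b1"
  shows "HI a b2 b1 (hc a b1 z) = hc a b2 z"
proof -
  have "hmap (CMw a b2) (dW a b2) id (hc a b1 z) = hc a b2 (id z)"
    by (rule hmap_hcls[OF window_complex window_complex])
       (auto simp: assms CM_mono[OF order_refl assms(1)] dW_up[OF assms(1)])
  thus ?thesis unfolding Hi_def by simp
qed

lemma hc_eq_iff: "z \<in> CMw a b \<Longrightarrow> z' \<in> CMw a b \<Longrightarrow>
    hc a b z = hc a b z' \<longleftrightarrow> (\<exists>y\<in>CMw a b. z = z' + dW a b y)"
  by (rule fun_complex.hcls_eq_iff[OF window_complex])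

lemma HM_carrier: "X \<in> vcarrier (HM a b) \<longleftrightarrow> (\<exists>z. z \<in> CMw a b \<and> dW a b z = 0 \<and> X = hc a b z)"
  unfolding HMab_def by (rule fun_complex.hom_carrier_iff[OF window_complex])

lemma HM_carrierE: assumes "X \<in> vcarrier (HM a b)"
  obtains z where "z \<in> CMw a b" "dW a b z = 0" "X = hc a b z"
  using assms HM_carrier by blast

lemma HM_carrierI: "z \<in> CMw a b \<Longrightarrow> dW a b z = 0 \<Longrightarrow> hc a b z \<in> vcarrier (HM a b)"
  using HM_carrier by blast

lemma HM_vadd: "z \<in> CMw a b \<Longrightarrow> z' \<in> CMw a b \<Longrightarrow>
    vadd (HM a b) (hc a b z) (hc a b z') = hc a b (z + z')"
  unfolding HMab_def by (rule fun_complex.hom_vadd[OF window_complex])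

lemma HM_vscale: "z \<in> CMw a b \<Longrightarrow> vscale (HM a b) k (hc a b z) = hc a b (\<lambda>c. k * z c)"
  unfolding HMab_def by (rule fun_complex.hom_vscale[OF window_complex])

lemma pick_HM: assumes "X \<in> vcarrier (HM a b)"
  shows "pick X \<in> CMw a b" "dW a b (pick X) = 0" "hc a b (pick X) = X"
  using fun_complex.pick_hcls_props[OF window_complex] HM_carrierE[OF assms] by metis+

lemma HM_add_closed: assumes "X \<in> vcarrier (HM a b)" "Y \<in> vcarrier (HM a b)"
  shows "vadd (HM a b) X Y \<in> vcarrier (HM a b)"
proof -
  obtain z w where z: "z \<in> CMw a b" "dW a b z = 0" "X = hc a b z"
    and w: "w \<in> CMw a b" "dW a b w = 0" "Y = hc a b w" using assms HM_carrierE by metis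
  have "dW a b (z + w) = 0" using fun_complex.d_add[OF window_complex z(1) w(1)] z(2) w(2) by simp
  thus ?thesis using HM_vadd[OF z(1) w(1)] z(3) w(3) HM_carrierI CM_add[OF z(1) w(1)] by simp
qed

lemma HM_scale_closed: assumes "X \<in> vcarrier (HM a b)" shows "vscale (HM a b) k X \<in> vcarrier (HM a b)"
proof -
  obtain z where z: "z \<in> CMw a b" "dW a b z = 0" "X = hc a b z" using assms HM_carrierE by blast
  have "dW a b (\<lambda>c. k * z c) = 0"
    using fun_complex.d_scale[OF window_complex z(1)] z(2) by (simp add: zero_fun_def)
  thus ?thesis using HM_vscale[OF z(1)] z(3) HM_carrierI CM_scale[OF z(1)] by simp
qed

lemma HI_closed: assumes "b1 \<le> b2" "X \<in> vcarrier (HM a b1)" shows "HI a b2 b1 X \<in> vcarrier (HM a b2)"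
  using assms(2) by (elim HM_carrierE)
    (simp add: HI_hc[OF assms(1)] HM_carrierI CM_mono[OF order_refl assms(1)] cycle_up[OF assms(1)])

lemma HP_closed: assumes "a1 \<le> a2" "X \<in> vcarrier (HM a1 b)" shows "HP b a2 a1 X \<in> vcarrier (HM a2 b)"
  using assms(2) by (elim HM_carrierE)
    (simp add: HP_hc[OF assms(1)] HM_carrierI above_CM[OF assms(1)] cycle_above[OF assms(1)])

lemma HP_HI: assumes "a1 \<le> a2" "b1 \<le> b2" "X \<in> vcarrier (HM a1 b1)"
  shows "HP b2 a2 a1 (HI a1 b2 b1 X) = HI a2 b2 b1 (HP b1 a2 a1 X)"
  using assms(3) by (elim HM_carrierE)
    (simp add: HI_hc[OF assms(2)] HP_hc[OF assms(1)] CM_mono[OF order_refl assms(2)] above_CM[OF assms(1)])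

lemma HM_direct_system: "direct_system (\<lambda>b. HM a b) (HI a)"
proof
  fix b1 b2 b3 :: real and X Y k
  show "b1 \<le> b2 \<Longrightarrow> X \<in> vcarrier (HM a b1) \<Longrightarrow> HI a b2 b1 X \<in> vcarrier (HM a b2)"
    by (rule HI_closed)
  show "X \<in> vcarrier (HM a b1) \<Longrightarrow> HI a b1 b1 X = X"
    by (elim HM_carrierE) (simp add: HI_hc)
  show "HI a b3 b2 (HI a b2 b1 X) = HI a b3 b1 X"
    if "b1 \<le> b2" "b2 \<le> b3" "X \<in> vcarrier (HM a b1)"
    using that(3) by (elim HM_carrierE)
      (simp add: HI_hc that(1,2) CM_mono[OF order_refl that(1)] order_trans[OF that(1,2)])
  show "HI a b2 b1 (vadd (HM a b1) X Y) = vadd (HM a b2) (HI a b2 b1 X) (HI a b2 b1 Y)"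
    if "b1 \<le> b2" "X \<in> vcarrier (HM a b1)" "Y \<in> vcarrier (HM a b1)"
    using that(2,3) by (elim HM_carrierE) (simp add: HI_hc[OF that(1)] HM_vadd CM_add CM_mono[OF order_refl that(1)])
  show "HI a b2 b1 (vscale (HM a b1) k X) = vscale (HM a b2) k (HI a b2 b1 X)"
    if "b1 \<le> b2" "X \<in> vcarrier (HM a b1)"
    using that(2) by (elim HM_carrierE) (simp add: HI_hc[OF that(1)] HM_vscale CM_scale CM_mono[OF order_refl that(1)])
  show "X \<in> vcarrier (HM a b1) \<Longrightarrow> Y \<in> vcarrier (HM a b1) \<Longrightarrow> vadd (HM a b1) X Y \<in> vcarrier (HM a b1)"
    by (rule HM_add_closed)
  show "X \<in> vcarrier (HM a b1) \<Longrightarrow> vscale (HM a b1) k X \<in> vcarrier (HM a b1)"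
    by (rule HM_scale_closed)
qed

lemma HP_add: assumes "a1 \<le> a2" "X \<in> vcarrier (HM a1 b)" "Y \<in> vcarrier (HM a1 b)"
  shows "HP b a2 a1 (vadd (HM a1 b) X Y) = vadd (HM a2 b) (HP b a2 a1 X) (HP b a2 a1 Y)"
  using assms(2,3) by (elim HM_carrierE) (simp add: HP_hc[OF assms(1)] HM_vadd CM_add above_CM[OF assms(1)] above_add)

lemma HP_scale: assumes "a1 \<le> a2" "X \<in> vcarrier (HM a1 b)"
  shows "HP b a2 a1 (vscale (HM a1 b) k X) = vscale (HM a2 b) k (HP b a2 a1 X)"
  using assms(2) by (elim HM_carrierE) (simp add: HP_hc[OF assms(1)] HM_vscale CM_scale above_CM[OF assms(1)] above_scale)

end

context floer begin

abbreviation IB :: "real \<Rightarrow> (real \<Rightarrow> ('c \<Rightarrow> 'k) set, 'k) vs" where "IB b \<equiv> invlimB C f m b"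
abbreviation iB :: "real \<Rightarrow> real \<Rightarrow> (real \<Rightarrow> ('c \<Rightarrow> 'k) set) \<Rightarrow> (real \<Rightarrow> ('c \<Rightarrow> 'k) set)" where
  "iB \<equiv> iotaB C f m"
abbreviation dA :: "real \<Rightarrow> real \<Rightarrow> ('c \<Rightarrow> 'k) set \<Rightarrow> (real \<times> ('c \<Rightarrow> 'k) set) set" where
  "dA a \<equiv> dcls (\<lambda>b'. HM a b') (HI a)"

lemma IB_carrier: "x \<in> vcarrier (IB b) \<longleftrightarrow>
    (\<forall>a. x a \<in> vcarrier (HM a b)) \<and> (\<forall>a1 a2. a1 \<le> a2 \<longrightarrow> HP b a2 a1 (x a1) = x a2)"
  unfolding invlimB_def invlim_vs_def by simp

lemma IB_vadd: "vadd (IB b) x y = (\<lambda>a. vadd (HM a b) (x a) (y a))"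
  unfolding invlimB_def invlim_vs_def by simp

lemma IB_vscale: "vscale (IB b) k x = (\<lambda>a. vscale (HM a b) k (x a))"
  unfolding invlimB_def invlim_vs_def by simp

lemma iB_apply: "iB b2 b1 x = (\<lambda>a. HI a b2 b1 (x a))"
  unfolding iotaB_def by simp

text \<open>Because \<open>Hp\<close> and \<open>Hi\<close> commute, the inverse limits \<open>lim_a HM_a^b\<close> again form a directed system in \<open>b\<close>.\<close>
lemma IB_direct_system: "direct_system IB iB"
proof
  fix b1 b2 b3 :: real and x y k
  show "iB b2 b1 x \<in> vcarrier (IB b2)" if b: "b1 \<le> b2" and x: "x \<in> vcarrier (IB b1)"
    using x HI_closed[OF b] HP_HI[OF _ b] unfolding IB_carrier iB_apply by auto
  show "x \<in> vcarrier (IB b1) \<Longrightarrow> iB b1 b1 x = x"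
    unfolding iB_apply IB_carrier
    using direct_system.i_id[OF HM_direct_system] by auto
  show "b1 \<le> b2 \<Longrightarrow> b2 \<le> b3 \<Longrightarrow> x \<in> vcarrier (IB b1) \<Longrightarrow> iB b3 b2 (iB b2 b1 x) = iB b3 b1 x"
    unfolding iB_apply IB_carrier using direct_system.i_comp[OF HM_direct_system] by auto
  show "b1 \<le> b2 \<Longrightarrow> x \<in> vcarrier (IB b1) \<Longrightarrow> y \<in> vcarrier (IB b1) \<Longrightarrow>
      iB b2 b1 (vadd (IB b1) x y) = vadd (IB b2) (iB b2 b1 x) (iB b2 b1 y)"
    unfolding iB_apply IB_carrier IB_vadd using direct_system.i_add[OF HM_direct_system] by auto
  show "b1 \<le> b2 \<Longrightarrow> x \<in> vcarrier (IB b1) \<Longrightarrow>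
      iB b2 b1 (vscale (IB b1) k x) = vscale (IB b2) k (iB b2 b1 x)"
    unfolding iB_apply IB_carrier IB_vscale using direct_system.i_scale[OF HM_direct_system] by auto
  show "x \<in> vcarrier (IB b1) \<Longrightarrow> y \<in> vcarrier (IB b1) \<Longrightarrow> vadd (IB b1) x y \<in> vcarrier (IB b1)"
    unfolding IB_carrier IB_vadd using HM_add_closed HP_add by auto
  show "x \<in> vcarrier (IB b1) \<Longrightarrow> vscale (IB b1) k x \<in> vcarrier (IB b1)"
    unfolding IB_carrier IB_vscale using HM_scale_closed HP_scale by auto
qed

lemma HMbar_carrier: "X \<in> vcarrier (HMbar C f m) \<longleftrightarrow> (\<exists>b x. x \<in> vcarrier (IB b) \<and> X = dcls IB iB b x)"
  unfolding HMbar_def by (rule direct_system.dlim_carrier[OF IB_direct_system])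

lemma dlimA_carrier: "X \<in> vcarrier (dlimA C f m a) \<longleftrightarrow> (\<exists>b x. x \<in> vcarrier (HM a b) \<and> X = dA a b x)"
  unfolding dlimA_def by (rule direct_system.dlim_carrier[OF HM_direct_system])

lemma HMunder_carrier: "U \<in> vcarrier (HMunder C f m) \<longleftrightarrow>
    (\<forall>a. U a \<in> vcarrier (dlimA C f m a)) \<and> (\<forall>a1 a2. a1 \<le> a2 \<longrightarrow> piA C f m a2 a1 (U a1) = U a2)"
  unfolding HMunder_def invlim_vs_def by simp

lemma HMunder_vadd: "vadd (HMunder C f m) U V = (\<lambda>a. vadd (dlimA C f m a) (U a) (V a))"
  unfolding HMunder_def invlim_vs_def by simp

lemma HMunder_vscale: "vscale (HMunder C f m) k U = (\<lambda>a. vscale (dlimA C f m a) k (U a))"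
  unfolding HMunder_def invlim_vs_def by simp

lemma piA_dA: assumes "a1 \<le> a2" "X \<in> vcarrier (HM a1 b)"
  shows "piA C f m a2 a1 (dA a1 b X) = dA a2 b (HP b a2 a1 X)"
  unfolding piA_def
  by (rule dlim_map_dcls[OF HM_direct_system HM_direct_system _ _ assms(2)])
     (auto simp: HP_closed[OF assms(1)] HP_HI[OF assms(1)])

lemma dA_eqI:
  assumes "z \<in> CMw a b" "dW a b z = 0" "z' \<in> CMw a b'" "dW a b' z' = 0"
    "b \<le> T" "b' \<le> T" "hc a T z = hc a T z'"
  shows "dA a b (hc a b z) = dA a b' (hc a b' z')"
  using assms HI_hc[OF assms(5,1)] HI_hc[OF assms(6,3)]
  by (intro direct_system.dcls_eqI[OF HM_direct_system HM_carrierI HM_carrierI]) auto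

lemma kappa_rep_eq: assumes x: "x \<in> vcarrier (IB b)" and p: "p \<in> dcls IB iB b x"
  shows "kappa_rep C f m p = (\<lambda>a. dA a b (x a))"
proof -
  obtain b' x' where p': "p = (b', x')" by (cases p)
  have x': "x' \<in> vcarrier (IB b')" and r: "direct_system.stage_eq iB b x b' x'"
    using p direct_system.dcls_iff[OF IB_direct_system] p' by auto
  obtain B where B: "b \<le> B" "b' \<le> B" "iB B b x = iB B b' x'"
    using r direct_system.stage_eq_def[OF IB_direct_system] by auto
  have "dA a b' (x' a) = dA a b (x a)" for a
  proof -
    have xa: "x a \<in> vcarrier (HM a b)" "x' a \<in> vcarrier (HM a b')" using x x' IB_carrier by auto
    have "HI a B b (x a) = HI a B b' (x' a)" using fun_cong[OF B(3), of a] iB_apply by simp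
    thus ?thesis by (intro direct_system.dcls_eqI[OF HM_direct_system xa(2) xa(1) B(2) B(1)]) simp
  qed
  thus ?thesis unfolding p' kappa_rep_def by auto
qed

lemma kappa_rep_well_defined:
  assumes "X \<in> vcarrier (HMbar C f m)" "p \<in> X" "q \<in> X"
  shows "kappa_rep C f m p = kappa_rep C f m q"
proof -
  obtain b x where "x \<in> vcarrier (IB b)" "X = dcls IB iB b x" using assms(1) HMbar_carrier by blast
  thus ?thesis using kappa_rep_eq assms(2,3) by simp
qed

lemma kappa_dcls: assumes x: "x \<in> vcarrier (IB b)"
  shows "kappa C f m (dcls IB iB b x) = (\<lambda>a. dA a b (x a))"
proof -
  have "pick (dcls IB iB b x) \<in> dcls IB iB b x"
    unfolding pick_def using direct_system.dcls_mem[OF IB_direct_system x] by (metis someI)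
  thus ?thesis unfolding kappa_def using kappa_rep_eq[OF x] by simp
qed

lemma kappa_closed: assumes x: "x \<in> vcarrier (IB b)"
  shows "(\<lambda>a. dA a b (x a)) \<in> vcarrier (HMunder C f m)"
  using x unfolding HMunder_carrier IB_carrier dlimA_carrier by (auto simp: piA_dA)

lemma kappa_vadd:
  assumes x: "x \<in> vcarrier (IB b)" and y: "y \<in> vcarrier (IB b')"
  shows "kappa C f m (vadd (HMbar C f m) (dcls IB iB b x) (dcls IB iB b' y)) =
         vadd (HMunder C f m) (kappa C f m (dcls IB iB b x)) (kappa C f m (dcls IB iB b' y))"
proof -
  define B where "B = max b b'"
  have B: "b \<le> B" "b' \<le> B" unfolding B_def by auto
  interpret I: direct_system IB iB by (rule IB_direct_system)
  define z where "z = vadd (IB B) (iB B b x) (iB B b' y)"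
  have z: "z \<in> vcarrier (IB B)" unfolding z_def using I.add_closed I.i_closed B x y by blast
  have "vadd (HMbar C f m) (dcls IB iB b x) (dcls IB iB b' y) = dcls IB iB B z"
    unfolding HMbar_def z_def by (rule I.dlim_vadd[OF x y B])
  moreover have "dA a B (z a) = vadd (dlimA C f m a) (dA a b (x a)) (dA a b' (y a))" for a
  proof -
    have "x a \<in> vcarrier (HM a b)" "y a \<in> vcarrier (HM a b')" using x y IB_carrier by auto
    thus ?thesis unfolding dlimA_def z_def IB_vadd iB_apply
      by (simp add: direct_system.dlim_vadd[OF HM_direct_system _ _ B])
  qed
  ultimately show ?thesis using kappa_dcls x y z by (simp add: HMunder_vadd)
qed

lemma kappa_vscale:
  assumes x: "x \<in> vcarrier (IB b)"
  shows "kappa C f m (vscale (HMbar C f m) k (dcls IB iB b x)) =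
         vscale (HMunder C f m) k (kappa C f m (dcls IB iB b x))"
proof -
  interpret I: direct_system IB iB by (rule IB_direct_system)
  have "vscale (HMbar C f m) k (dcls IB iB b x) = dcls IB iB b (vscale (IB b) k x)"
    unfolding HMbar_def by (rule I.dlim_vscale[OF x])
  moreover have "dA a b (vscale (HM a b) k (x a)) = vscale (dlimA C f m a) k (dA a b (x a))" for a
    using x IB_carrier unfolding dlimA_def by (simp add: direct_system.dlim_vscale[OF HM_direct_system])
  ultimately show ?thesis using kappa_dcls x I.scale_closed[OF x] by (simp add: HMunder_vscale IB_vscale)
qed

lemma kappa_linear: "lin_map (HMbar C f m) (HMunder C f m) (kappa C f m)"
  unfolding lin_map_def
proof (intro conjI ballI allI)
  fix X assume "X \<in> vcarrier (HMbar C f m)"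
  then obtain b x where "x \<in> vcarrier (IB b)" "X = dcls IB iB b x" using HMbar_carrier by blast
  thus "kappa C f m X \<in> vcarrier (HMunder C f m)" using kappa_dcls kappa_closed by simp
next
  fix X Y assume "X \<in> vcarrier (HMbar C f m)" "Y \<in> vcarrier (HMbar C f m)"
  then obtain b x b' y where "x \<in> vcarrier (IB b)" "X = dcls IB iB b x"
    and "y \<in> vcarrier (IB b')" "Y = dcls IB iB b' y" using HMbar_carrier by meson
  thus "kappa C f m (vadd (HMbar C f m) X Y) = vadd (HMunder C f m) (kappa C f m X) (kappa C f m Y)"
    using kappa_vadd by simp
next
  fix k X assume "X \<in> vcarrier (HMbar C f m)"
  then obtain b x where "x \<in> vcarrier (IB b)" "X = dcls IB iB b x" using HMbar_carrier by blast
  thus "kappa C f m (vscale (HMbar C f m) k X) = vscale (HMunder C f m) k (kappa C f m X)"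
    using kappa_vscale by simp
qed

end

context floer begin

abbreviation trunc_classes :: "('c \<Rightarrow> 'k) \<Rightarrow> real \<Rightarrow> real \<Rightarrow> ('c \<Rightarrow> 'k) set" where
  "trunc_classes \<xi> b \<equiv> (\<lambda>a. hc a b (trunc f a b \<xi>))"

lemma trunc_cycle: "x \<in> \<Lambda> \<Longrightarrow> dN x = 0 \<Longrightarrow> upper_bound f x b \<Longrightarrow> dW a b (trunc f a b x) = 0"
  using dW_trunc[of x b a] by (simp add: trunc_def zero_fun_def)

lemma trunc_classes_in: assumes "\<xi> \<in> \<Lambda>" "dN \<xi> = 0" "upper_bound f \<xi> b"
  shows "trunc_classes \<xi> b \<in> vcarrier (IB b)"
  unfolding IB_carrier
  using HM_carrierI[OF trunc_CM trunc_cycle[OF assms]] HP_hc[OF _ trunc_CM[OF assms(1)]] above_trunc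
  by (auto simp: assms(1))

lemma iB_trunc_classes: assumes "\<xi> \<in> \<Lambda>" "upper_bound f \<xi> b" "b \<le> B"
  shows "iB B b (trunc_classes \<xi> b) = trunc_classes \<xi> B"
  unfolding iB_apply using HI_hc[OF assms(3) trunc_CM[OF assms(1)]] trunc_bound_eq[OF assms(2,3)] by simp

lemma rhobar_cyc_push: assumes "\<xi> \<in> \<Lambda>" "dN \<xi> = 0" "upper_bound f \<xi> b" "b \<le> B"
  shows "rhobar_cyc C f m \<xi> b = rhobar_cyc C f m \<xi> B"
  using direct_system.dcls_push[OF IB_direct_system trunc_classes_in[OF assms(1-3)] assms(4)]
    iB_trunc_classes[OF assms(1,3,4)]
  unfolding rhobar_cyc_def by simp

lemma rhounder_cyc_push: assumes "\<xi> \<in> \<Lambda>" "dN \<xi> = 0" "upper_bound f \<xi> b" "b \<le> B"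
  shows "rhounder_cyc C f m \<xi> b = rhounder_cyc C f m \<xi> B"
proof (rule ext)
  fix a
  have "dA a B (HI a B b (hc a b (trunc f a b \<xi>))) = dA a b (hc a b (trunc f a b \<xi>))"
    by (rule direct_system.dcls_push[OF HM_direct_system HM_carrierI[OF trunc_CM trunc_cycle] assms(4)])
       (use assms in auto)
  thus "rhounder_cyc C f m \<xi> b a = rhounder_cyc C f m \<xi> B a"
    unfolding rhounder_cyc_def
    using HI_hc[OF assms(4) trunc_CM[OF assms(1)]] trunc_bound_eq[OF assms(3,4)] by simp
qed

lemma trunc_classes_homologous:
  assumes "\<xi>' \<in> \<Lambda>" "\<eta> \<in> \<Lambda>" "upper_bound f \<eta> B"
  shows "trunc_classes (\<xi>' + dN \<eta>) B = trunc_classes \<xi>' B"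
proof (rule ext)
  fix a
  have "trunc f a B (\<xi>' + dN \<eta>) = trunc f a B \<xi>' + dW a B (trunc f a B \<eta>)"
    using trunc_add dW_trunc[OF assms(2,3)] by simp
  thus "hc a B (trunc f a B (\<xi>' + dN \<eta>)) = hc a B (trunc f a B \<xi>')"
    using hc_eq_iff[OF trunc_CM trunc_CM[OF assms(1)]] trunc_CM[OF assms(2)]
      nov_add[OF assms(1) dN_nov[OF assms(2)]] by blast
qed

lemma rho_cyc_well_defined:
  assumes "\<xi> \<in> \<Lambda>" "\<xi>' \<in> \<Lambda>" "dN \<xi> = 0" "dN \<xi>' = 0" "hcls \<Lambda> dN \<xi> = hcls \<Lambda> dN \<xi>'"
    "upper_bound f \<xi> b" "upper_bound f \<xi>' b'"
  shows "rhobar_cyc C f m \<xi> b = rhobar_cyc C f m \<xi>' b'"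
    "rhounder_cyc C f m \<xi> b = rhounder_cyc C f m \<xi>' b'"
proof -
  obtain \<eta> where \<eta>: "\<eta> \<in> \<Lambda>" "\<xi> = \<xi>' + dN \<eta>" using nov_hcls_eq_iff[OF assms(1,2)] assms(5) by blast
  obtain B0 where B0: "upper_bound f \<eta> B0" using nov_bounded[OF \<eta>(1)] by blast
  define B where "B = max (max b b') B0"
  have bB: "b \<le> B" "b' \<le> B" "B0 \<le> B" unfolding B_def by auto
  have same: "trunc_classes \<xi> B = trunc_classes \<xi>' B"
    unfolding \<eta>(2) by (rule trunc_classes_homologous[OF assms(2) \<eta>(1) bound_mono[OF B0 bB(3)]])
  have "rhobar_cyc C f m \<xi> b = rhobar_cyc C f m \<xi> B" by (rule rhobar_cyc_push[OF assms(1,3,6) bB(1)])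
  also have "\<dots> = rhobar_cyc C f m \<xi>' B" unfolding rhobar_cyc_def using same by simp
  also have "\<dots> = rhobar_cyc C f m \<xi>' b'" by (rule rhobar_cyc_push[OF assms(2,4,7) bB(2), symmetric])
  finally show "rhobar_cyc C f m \<xi> b = rhobar_cyc C f m \<xi>' b'" .
  have "rhounder_cyc C f m \<xi> b = rhounder_cyc C f m \<xi> B" by (rule rhounder_cyc_push[OF assms(1,3,6) bB(1)])
  also have "\<dots> = rhounder_cyc C f m \<xi>' B" unfolding rhounder_cyc_def using same by metis
  also have "\<dots> = rhounder_cyc C f m \<xi>' b'" by (rule rhounder_cyc_push[OF assms(2,4,7) bB(2), symmetric])
  finally show "rhounder_cyc C f m \<xi> b = rhounder_cyc C f m \<xi>' b'" .
qed

lemma rho_hcls: assumes "\<xi> \<in> \<Lambda>" "dN \<xi> = 0" "upper_bound f \<xi> b"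
  shows "rhobar C f m (hcls \<Lambda> dN \<xi>) = rhobar_cyc C f m \<xi> b"
    "rhounder C f m (hcls \<Lambda> dN \<xi>) = rhounder_cyc C f m \<xi> b"
proof -
  define \<xi>' where "\<xi>' = pick (hcls \<Lambda> dN \<xi>)"
  have \<xi>': "\<xi>' \<in> \<Lambda>" "dN \<xi>' = 0" "hcls \<Lambda> dN \<xi>' = hcls \<Lambda> dN \<xi>"
    using fun_complex.pick_hcls_props[OF nov_complex assms(1,2)] \<xi>'_def by auto
  define b' where "b' = (SOME b. upper_bound f \<xi>' b)"
  have b': "upper_bound f \<xi>' b'" unfolding b'_def using nov_bounded[OF \<xi>'(1)] by (metis someI)
  show "rhobar C f m (hcls \<Lambda> dN \<xi>) = rhobar_cyc C f m \<xi> b"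
    "rhounder C f m (hcls \<Lambda> dN \<xi>) = rhounder_cyc C f m \<xi> b"
    using rho_cyc_well_defined[OF \<xi>'(1) assms(1) \<xi>'(2) assms(2) \<xi>'(3) b' assms(3)]
    unfolding rhobar_def rhounder_def \<xi>'_def[symmetric] b'_def[symmetric] by auto
qed

lemma HMnov_cases:
  assumes "X \<in> vcarrier (HMnov C f m)"
  obtains \<xi> b where "\<xi> \<in> \<Lambda>" "dN \<xi> = 0" "upper_bound f \<xi> b" "X = hcls \<Lambda> dN \<xi>"
  using assms nov_bounded unfolding HMnov_carrier by blast

lemma HMnov_vadd: "\<xi> \<in> \<Lambda> \<Longrightarrow> \<eta> \<in> \<Lambda> \<Longrightarrow>
    vadd (HMnov C f m) (hcls \<Lambda> dN \<xi>) (hcls \<Lambda> dN \<eta>) = hcls \<Lambda> dN (\<xi> + \<eta>)"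
  unfolding HMnov_def by (rule fun_complex.hom_vadd[OF nov_complex])

lemma HMnov_vscale: "\<xi> \<in> \<Lambda> \<Longrightarrow> vscale (HMnov C f m) k (hcls \<Lambda> dN \<xi>) = hcls \<Lambda> dN (\<lambda>c. k * \<xi> c)"
  unfolding HMnov_def by (rule fun_complex.hom_vscale[OF nov_complex])

lemma cycle_add: "\<xi> \<in> \<Lambda> \<Longrightarrow> \<eta> \<in> \<Lambda> \<Longrightarrow> dN \<xi> = 0 \<Longrightarrow> dN \<eta> = 0 \<Longrightarrow> dN (\<xi> + \<eta>) = 0"
  by (simp add: dN_add)

lemma cycle_scale: "\<xi> \<in> \<Lambda> \<Longrightarrow> dN \<xi> = 0 \<Longrightarrow> dN (\<lambda>c. k * \<xi> c) = 0"
  by (simp add: dN_scale zero_fun_def)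

lemma HMnov_add_closed: "X \<in> vcarrier (HMnov C f m) \<Longrightarrow> Y \<in> vcarrier (HMnov C f m) \<Longrightarrow>
    vadd (HMnov C f m) X Y \<in> vcarrier (HMnov C f m)"
  unfolding HMnov_carrier using HMnov_vadd nov_add cycle_add by metis

lemma HMnov_scale_closed: "X \<in> vcarrier (HMnov C f m) \<Longrightarrow> vscale (HMnov C f m) k X \<in> vcarrier (HMnov C f m)"
  unfolding HMnov_carrier using HMnov_vscale nov_scale cycle_scale by metis

lemma trunc_classes_add:
  assumes "\<xi> \<in> \<Lambda>" "\<eta> \<in> \<Lambda>"
  shows "vadd (IB B) (trunc_classes \<xi> B) (trunc_classes \<eta> B) = trunc_classes (\<xi> + \<eta>) B"
  unfolding IB_vadd using HM_vadd[OF trunc_CM[OF assms(1)] trunc_CM[OF assms(2)]] by (simp add: trunc_add)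

lemma trunc_classes_scale:
  assumes "\<xi> \<in> \<Lambda>"
  shows "vscale (IB B) k (trunc_classes \<xi> B) = trunc_classes (\<lambda>c. k * \<xi> c) B"
  unfolding IB_vscale using HM_vscale[OF trunc_CM[OF assms]] by (simp add: trunc_scale)

lemma rhobar_vadd:
  assumes \<xi>: "\<xi> \<in> \<Lambda>" "dN \<xi> = 0" "upper_bound f \<xi> b"
    and \<eta>: "\<eta> \<in> \<Lambda>" "dN \<eta> = 0" "upper_bound f \<eta> b'"
  shows "rhobar C f m (vadd (HMnov C f m) (hcls \<Lambda> dN \<xi>) (hcls \<Lambda> dN \<eta>)) =
         vadd (HMbar C f m) (rhobar C f m (hcls \<Lambda> dN \<xi>)) (rhobar C f m (hcls \<Lambda> dN \<eta>))"
proof -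
  define B where "B = max b b'"
  have ub: "upper_bound f \<xi> B" "upper_bound f \<eta> B"
    using bound_mono[OF \<xi>(3)] bound_mono[OF \<eta>(3)] unfolding B_def by auto
  have ub_sum: "upper_bound f (\<xi> + \<eta>) B"
    using ub unfolding upper_bound_def by (metis add.left_neutral plus_fun_apply)
  have tc: "trunc_classes \<xi> B \<in> vcarrier (IB B)" "trunc_classes \<eta> B \<in> vcarrier (IB B)"
    using trunc_classes_in \<xi> \<eta> ub by auto
  have "rhobar C f m (vadd (HMnov C f m) (hcls \<Lambda> dN \<xi>) (hcls \<Lambda> dN \<eta>)) =
        dcls IB iB B (trunc_classes (\<xi> + \<eta>) B)"
    using HMnov_vadd[OF \<xi>(1) \<eta>(1)] rho_hcls(1)[OF nov_add[OF \<xi>(1) \<eta>(1)] cycle_add ub_sum] \<xi> \<eta>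
    unfolding rhobar_cyc_def by simp
  also have "\<dots> = vadd (HMbar C f m) (dcls IB iB B (trunc_classes \<xi> B)) (dcls IB iB B (trunc_classes \<eta> B))"
    unfolding HMbar_def direct_system.dlim_vadd[OF IB_direct_system tc order_refl order_refl]
    using direct_system.i_id[OF IB_direct_system] tc trunc_classes_add[OF \<xi>(1) \<eta>(1)] by simp
  also have "\<dots> = vadd (HMbar C f m) (rhobar C f m (hcls \<Lambda> dN \<xi>)) (rhobar C f m (hcls \<Lambda> dN \<eta>))"
    using rho_hcls(1)[OF \<xi>(1,2) ub(1)] rho_hcls(1)[OF \<eta>(1,2) ub(2)] unfolding rhobar_cyc_def by simp
  finally show ?thesis .
qed

lemma rhobar_vscale:
  assumes \<xi>: "\<xi> \<in> \<Lambda>" "dN \<xi> = 0" "upper_bound f \<xi> b"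
  shows "rhobar C f m (vscale (HMnov C f m) k (hcls \<Lambda> dN \<xi>)) =
         vscale (HMbar C f m) k (rhobar C f m (hcls \<Lambda> dN \<xi>))"
proof -
  have ub: "upper_bound f (\<lambda>c. k * \<xi> c) b" using \<xi>(3) unfolding upper_bound_def by auto
  have "rhobar C f m (vscale (HMnov C f m) k (hcls \<Lambda> dN \<xi>)) =
        dcls IB iB b (vscale (IB b) k (trunc_classes \<xi> b))"
    using trunc_classes_scale[OF \<xi>(1)] HMnov_vscale[OF \<xi>(1)]
      rho_hcls(1)[OF nov_scale[OF \<xi>(1)] cycle_scale[OF \<xi>(1,2)] ub]
    unfolding rhobar_cyc_def by simp
  also have "\<dots> = vscale (HMbar C f m) k (rhobar C f m (hcls \<Lambda> dN \<xi>))"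
    using rho_hcls(1)[OF \<xi>(1-3)]
      direct_system.dlim_vscale[OF IB_direct_system trunc_classes_in[OF \<xi>(1-3)]]
    unfolding rhobar_cyc_def HMbar_def by simp
  finally show ?thesis .
qed

text \<open>Linearity of \<open>\<overline>\<rho>\<close>; \<open>\<underline>\<rho>\<close> then inherits linearity from \<open>\<kappa> \<circ> \<overline>\<rho> = \<underline>\<rho>\<close>.\<close>
lemma rhobar_linear: "lin_map (HMnov C f m) (HMbar C f m) (rhobar C f m)"
  unfolding lin_map_def
proof (intro conjI ballI allI)
  fix X assume "X \<in> vcarrier (HMnov C f m)"
  then obtain \<xi> b where \<xi>: "\<xi> \<in> \<Lambda>" "dN \<xi> = 0" "upper_bound f \<xi> b" "X = hcls \<Lambda> dN \<xi>"
    by (rule HMnov_cases)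
  show "rhobar C f m X \<in> vcarrier (HMbar C f m)"
    using rho_hcls(1)[OF \<xi>(1-3)] trunc_classes_in[OF \<xi>(1-3)] \<xi>(4)
    unfolding HMbar_carrier rhobar_cyc_def by blast
next
  fix X Y assume "X \<in> vcarrier (HMnov C f m)" "Y \<in> vcarrier (HMnov C f m)"
  thus "rhobar C f m (vadd (HMnov C f m) X Y) = vadd (HMbar C f m) (rhobar C f m X) (rhobar C f m Y)"
    by (metis HMnov_cases rhobar_vadd)
next
  fix k X assume "X \<in> vcarrier (HMnov C f m)"
  thus "rhobar C f m (vscale (HMnov C f m) k X) = vscale (HMbar C f m) k (rhobar C f m X)"
    by (metis HMnov_cases rhobar_vscale)
qed

lemma kappa_rhobar: assumes "X \<in> vcarrier (HMnov C f m)"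
  shows "kappa C f m (rhobar C f m X) = rhounder C f m X"
  using assms
proof (rule HMnov_cases)
  fix \<xi> b assume \<xi>: "\<xi> \<in> \<Lambda>" "dN \<xi> = 0" "upper_bound f \<xi> b" "X = hcls \<Lambda> dN \<xi>"
  show ?thesis using rho_hcls[OF \<xi>(1-3)] kappa_dcls[OF trunc_classes_in[OF \<xi>(1-3)]] \<xi>(4)
    unfolding rhobar_cyc_def rhounder_cyc_def by simp
qed

lemma rhounder_linear: "lin_map (HMnov C f m) (HMunder C f m) (rhounder C f m)"
  by (rule lin_map_factor[OF rhobar_linear kappa_linear])
     (auto simp: kappa_rhobar HMnov_add_closed HMnov_scale_closed)

end

section \<open>Gluing towers of window chains\<close>

text \<open>We approach \<open>a \<rightarrow> -\<infinity>\<close> along the levels \<open>-n\<close>.\<close>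
definition level :: "nat \<Rightarrow> real" where "level n = - real n"

lemma level_antimono: "n \<le> k \<Longrightarrow> level k \<le> level n"
  unfolding level_def by simp

lemma level_Suc: "level (Suc n) \<le> level n"
  unfolding level_def by simp

lemma level_below: "level (nat \<lceil>- t\<rceil>) \<le> t"
  unfolding level_def by linarith

context floer begin

text \<open>A tower \<open>w n\<close> of chains with \<open>above (level n) (w (Suc n)) = w n\<close> glues to the
  chain whose coefficient at \<open>c\<close> is read off at the first level below \<open>f c\<close>.\<close>
definition glue :: "(nat \<Rightarrow> 'c \<Rightarrow> 'k) \<Rightarrow> 'c \<Rightarrow> 'k" where
  "glue w c = w (nat \<lceil>- f c\<rceil>) c"

lemma above_tower:
  assumes "\<And>n. above (level n) (w (Suc n)) = w n" "n \<le> k"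
  shows "above (level n) (w k) = w n"
proof -
  have "above (level n) (w (n + j)) = w n" for j
  proof (induction j)
    case 0
    have "above (level n) (w n) = above (level n) (above (level n) (w (Suc n)))"
      using assms(1)[of n] by simp
    also have "\<dots> = above (level n) (w (Suc n))" by (rule above_above) simp
    also have "\<dots> = w n" by (rule assms(1))
    finally show ?case by simp
  next
    case (Suc j)
    have "above (level n) (w (n + Suc j)) = above (level n) (above (level (n + j)) (w (Suc (n + j))))"
      using above_above[OF level_antimono[of n "n + j"]] by simp
    thus ?case using assms(1)[of "n + j"] Suc by simp
  qed
  from this[of "k - n"] assms(2) show ?thesis by simp
qed

context
  fixes w :: "nat \<Rightarrow> 'c \<Rightarrow> 'k" and Bw :: "nat \<Rightarrow> real"
  assumes w_in: "\<And>n. w n \<in> CMw (level n) (Bw n)"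
    and w_coherent: "\<And>n. above (level n) (w (Suc n)) = w n"
begin

lemma glue_eq: assumes "level n \<le> f c" shows "glue w c = w n c"
proof -
  define N where "N = nat \<lceil>- f c\<rceil>"
  define k where "k = max n N"
  have "w n c = above (level n) (w k) c" using above_tower[OF w_coherent, of n k] k_def by simp
  also have "\<dots> = above (level N) (w k) c" using assms level_below[of "f c"] unfolding above_def N_def by simp
  also have "\<dots> = w N c" using above_tower[OF w_coherent, of N k] k_def by simp
  finally show ?thesis unfolding glue_def N_def by simp
qed

lemma above_glue: "above (level n) (glue w) = w n"
proof (rule ext)
  fix c show "above (level n) (glue w) c = w n c"
    using glue_eq w_in[of n] unfolding above_def CM_iff by auto
qed

lemma glue_nov: "glue w \<in> \<Lambda>"
proof -
  have "glue w c \<noteq> 0 \<Longrightarrow> c \<in> C" for c unfolding glue_def using w_in CM_iff by blast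
  moreover have "finite {c. glue w c \<noteq> 0 \<and> t < f c}" for t
  proof -
    define n where "n = nat \<lceil>- t\<rceil>"
    have "{c. glue w c \<noteq> 0 \<and> t < f c} \<subseteq> Cab C f (level n) (Bw n)"
    proof
      fix c assume c: "c \<in> {c. glue w c \<noteq> 0 \<and> t < f c}"
      have "level n \<le> f c" using level_below[of t] c n_def by simp
      hence "w n c \<noteq> 0" using c glue_eq by simp
      thus "c \<in> Cab C f (level n) (Bw n)" using w_in[of n] unfolding CM_def by auto
    qed
    thus ?thesis using finite_Cab finite_subset by blast
  qed
  ultimately show ?thesis unfolding Nov_def by blast
qed

lemma dN_glue:
  assumes \<zeta>: "\<zeta> \<in> \<Lambda>" "\<And>n. upper_bound f \<zeta> (Bw n)"
    and w_d: "\<And>n. dW (level n) (Bw n) (w n) = trunc f (level n) (Bw n) \<zeta>"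
  shows "dN (glue w) = \<zeta>"
proof (rule ext)
  fix c'
  show "dN (glue w) c' = \<zeta> c'"
  proof (cases "c' \<in> C")
    case True
    define n where "n = nat \<lceil>- f c'\<rceil>"
    have n: "level n \<le> f c'" unfolding n_def by (rule level_below)
    have "dN (glue w) c' = dN (w n) c'"
      by (rule dN_local[OF glue_nov CM_nov[OF w_in]]) (use n in \<open>auto intro!: glue_eq\<close>)
    also have "\<dots> = \<zeta> c'"
    proof (cases "f c' \<le> Bw n")
      case True
      thus ?thesis using fun_cong[OF w_d[of n], of c'] dW_eq[OF w_in[of n]] n unfolding trunc_def by simp
    next
      case False
      thus ?thesis using dN_bound[OF CM_bound[OF w_in[of n]]] \<zeta>(2)[of n]
        unfolding upper_bound_def by force
    qed
    finally show ?thesis .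
  next
    case False
    hence "\<zeta> c' = 0" using nov_supp[OF \<zeta>(1)] by blast
    thus ?thesis using False by (simp add: dN_outside)
  qed
qed

lemma glue_cycle: "(\<And>n. dW (level n) (Bw n) (w n) = 0) \<Longrightarrow> dN (glue w) = 0"
  using dN_glue[OF nov_zero] by (simp add: upper_bound_def trunc_def zero_fun_def)

end

lemma above_correction:
  assumes Y: "Y \<in> CMw (level n) B" and Ys: "Ys \<in> CMw (level n) B'" and B: "B \<le> B'"
    and coh: "above (level n) z' = z + dW (level n) B' Ys"
  shows "above (level n) (z' + dW (level (Suc n)) B' (Y - Ys)) = z + dW (level n) B Y"
proof -
  interpret K: fun_complex "CMw (level n) B'" "dW (level n) B'" by (rule window_complex)
  have Y': "Y \<in> CMw (level n) B'" using CM_mono[OF order_refl B Y] .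
  have diff: "Y - Ys \<in> CMw (level (Suc n)) B'" using CM_mono[OF level_Suc order_refl CM_diff[OF Y' Ys]] .
  have "above (level n) (z' + dW (level (Suc n)) B' (Y - Ys)) =
        z + dW (level n) B' Ys + dW (level n) B' (above (level n) (Y - Ys))"
    using coh above_dW[OF level_Suc diff] by (simp add: above_add)
  also have "\<dots> = z + dW (level n) B' Y"
    using above_id[OF CM_diff[OF Y' Ys] order_refl] K.d_diff[OF Y' Ys] by simp
  also have "\<dots> = z + dW (level n) B Y" using dW_up[OF B Y] by simp
  finally show ?thesis .
qed

lemma strictify_tower:
  fixes z :: "nat \<Rightarrow> 'c \<Rightarrow> 'k" and Bw :: "nat \<Rightarrow> real"
  assumes z_in: "\<And>n. z n \<in> CMw (level n) (Bw n)" and z_cycle: "\<And>n. dW (level n) (Bw n) (z n) = 0"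
    and mono: "\<And>n. Bw n \<le> Bw (Suc n)"
    and step: "\<And>n. \<exists>y\<in>CMw (level n) (Bw (Suc n)).
                 above (level n) (z (Suc n)) = z n + dW (level n) (Bw (Suc n)) y"
  shows "\<exists>zz. \<forall>n. zz n \<in> CMw (level n) (Bw n) \<and> dW (level n) (Bw n) (zz n) = 0 \<and>
            (\<exists>y\<in>CMw (level n) (Bw n). zz n = z n + dW (level n) (Bw n) y) \<and>
            above (level n) (zz (Suc n)) = zz n"
proof -
  obtain Ys where Ys: "\<And>n. Ys n \<in> CMw (level n) (Bw (Suc n))"
    "\<And>n. above (level n) (z (Suc n)) = z n + dW (level n) (Bw (Suc n)) (Ys n)"
    using step by metis
  text \<open>The correction at level \<open>n\<close> is the boundary of \<open>Y n = - (Ys 0 + \<dots> + Ys (n-1))\<close>.\<close>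
  define Y where "Y = rec_nat 0 (\<lambda>n Yn. Yn - Ys n)"
  have Y0: "Y 0 = 0" and YS: "Y (Suc n) = Y n - Ys n" for n unfolding Y_def by simp_all
  have Y_in: "Y n \<in> CMw (level n) (Bw n)" for n
  proof (induction n)
    case 0 show ?case unfolding Y0 by (rule CM_zero)
  next
    case (Suc n)
    show ?case unfolding YS
      by (rule CM_diff[OF CM_mono[OF level_Suc mono Suc] CM_mono[OF level_Suc order_refl Ys(1)]])
  qed
  define zz where "zz n = z n + dW (level n) (Bw n) (Y n)" for n
  have "zz n \<in> CMw (level n) (Bw n) \<and> dW (level n) (Bw n) (zz n) = 0 \<and>
        (\<exists>y\<in>CMw (level n) (Bw n). zz n = z n + dW (level n) (Bw n) y) \<and>
        above (level n) (zz (Suc n)) = zz n" for n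
  proof (intro conjI)
    interpret K: fun_complex "CMw (level n) (Bw n)" "dW (level n) (Bw n)" by (rule window_complex)
    show "zz n \<in> CMw (level n) (Bw n)" unfolding zz_def using z_in K.d_closed[OF Y_in] CM_add by blast
    show "dW (level n) (Bw n) (zz n) = 0" unfolding zz_def
      using K.d_add[OF z_in K.d_closed[OF Y_in]] z_cycle K.d_d[OF Y_in] by simp
    show "\<exists>y\<in>CMw (level n) (Bw n). zz n = z n + dW (level n) (Bw n) y" unfolding zz_def using Y_in by blast
    show "above (level n) (zz (Suc n)) = zz n"
      unfolding zz_def YS by (rule above_correction[OF Y_in Ys(1) mono Ys(2)])
  qed
  thus ?thesis by blast
qed

lemma glue_tower:
  fixes z :: "nat \<Rightarrow> 'c \<Rightarrow> 'k" and Bw :: "nat \<Rightarrow> real"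
  assumes z_in: "\<And>n. z n \<in> CMw (level n) (Bw n)" and z_cycle: "\<And>n. dW (level n) (Bw n) (z n) = 0"
    and mono: "\<And>n. Bw n \<le> Bw (Suc n)"
    and step: "\<And>n. hc (level n) (Bw (Suc n)) (above (level n) (z (Suc n))) = hc (level n) (Bw (Suc n)) (z n)"
  obtains \<xi> where "\<xi> \<in> \<Lambda>" "dN \<xi> = 0"
    "\<And>n. above (level n) \<xi> \<in> CMw (level n) (Bw n)"
    "\<And>n. hc (level n) (Bw n) (above (level n) \<xi>) = hc (level n) (Bw n) (z n)"
proof -
  have "\<exists>y\<in>CMw (level n) (Bw (Suc n)). above (level n) (z (Suc n)) = z n + dW (level n) (Bw (Suc n)) y" for n
    using step[of n] hc_eq_iff[OF above_CM[OF level_Suc z_in] CM_mono[OF order_refl mono z_in]] by blast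
  then obtain zz where zz: "\<And>n. zz n \<in> CMw (level n) (Bw n)" "\<And>n. dW (level n) (Bw n) (zz n) = 0"
    "\<And>n. \<exists>y\<in>CMw (level n) (Bw n). zz n = z n + dW (level n) (Bw n) y"
    "\<And>n. above (level n) (zz (Suc n)) = zz n"
    using strictify_tower[OF z_in z_cycle mono] by metis
  show ?thesis
  proof (rule that[of "glue zz"])
    show "glue zz \<in> \<Lambda>" by (rule glue_nov[OF zz(1) zz(4)])
    show "dN (glue zz) = 0" by (rule glue_cycle[OF zz(1) zz(4) zz(2)])
    show "above (level n) (glue zz) \<in> CMw (level n) (Bw n)" for n
      using above_glue[OF zz(1) zz(4)] zz(1) by simp
    show "hc (level n) (Bw n) (above (level n) (glue zz)) = hc (level n) (Bw n) (z n)" for n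
      using above_glue[OF zz(1) zz(4)] zz(3) hc_eq_iff[OF zz(1) z_in] by auto
  qed
qed

end

section \<open>Mittag-Leffler: boundaries in every window are Novikov boundaries\<close>

context floer begin

definition primitives :: "('c \<Rightarrow> 'k) \<Rightarrow> real \<Rightarrow> nat \<Rightarrow> ('c \<Rightarrow> 'k) set" where
  "primitives \<zeta> B n = {y \<in> CMw (level n) B. dW (level n) B y = trunc f (level n) B \<zeta>}"

definition wcycles :: "real \<Rightarrow> nat \<Rightarrow> ('c \<Rightarrow> 'k) set" where
  "wcycles B n = {y \<in> CMw (level n) B. dW (level n) B y = 0}"

lemma primitives_above: assumes "n \<le> k" "y \<in> primitives \<zeta> B k"
  shows "above (level n) y \<in> primitives \<zeta> B n"
proof -
  have a: "level k \<le> level n" by (rule level_antimono[OF assms(1)])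
  have y: "y \<in> CMw (level k) B" "dW (level k) B y = trunc f (level k) B \<zeta>"
    using assms(2) unfolding primitives_def by auto
  have "dW (level n) B (above (level n) y) = above (level n) (dW (level k) B y)"
    using above_dW[OF a y(1)] by simp
  also have "\<dots> = trunc f (level n) B \<zeta>" using y(2) above_trunc[OF a] by simp
  finally show ?thesis using above_CM[OF a y(1)] unfolding primitives_def by simp
qed

lemma wcycles_above: assumes "n \<le> k" "y \<in> wcycles B k" shows "above (level n) y \<in> wcycles B n"
  using assms above_CM[OF level_antimono[OF assms(1)]] cycle_above[OF level_antimono[OF assms(1)]]
  unfolding wcycles_def by auto

lemma primitives_diff: "y \<in> primitives \<zeta> B k \<Longrightarrow> y' \<in> primitives \<zeta> B k \<Longrightarrow> y - y' \<in> wcycles B k"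
  using fun_complex.d_diff[OF window_complex] CM_diff unfolding primitives_def wcycles_def by auto

lemma primitives_add_cycle: "y \<in> primitives \<zeta> B k \<Longrightarrow> z \<in> wcycles B k \<Longrightarrow> y + z \<in> primitives \<zeta> B k"
  using fun_complex.d_add[OF window_complex] CM_add unfolding primitives_def wcycles_def by auto

lemma wcycles_subspace: "fvs.subspace (above a ` wcycles B k)"
  unfolding fvs.subspace_def wcycles_def fscale_def
proof (intro conjI ballI allI)
  show "0 \<in> above a ` {y \<in> CMw (level k) B. dW (level k) B y = 0}"
    using CM_zero fun_complex.d_zero[OF window_complex] above_zero by (metis (mono_tags) image_eqI mem_Collect_eq)
next
  fix x y assume "x \<in> above a ` {y \<in> CMw (level k) B. dW (level k) B y = 0}"
    "y \<in> above a ` {y \<in> CMw (level k) B. dW (level k) B y = 0}"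
  then obtain x' y' where "x' \<in> CMw (level k) B" "dW (level k) B x' = 0" "x = above a x'"
    "y' \<in> CMw (level k) B" "dW (level k) B y' = 0" "y = above a y'" by auto
  thus "x + y \<in> above a ` {y \<in> CMw (level k) B. dW (level k) B y = 0}"
    using CM_add fun_complex.d_add[OF window_complex] above_add by (intro image_eqI[of _ _ "x' + y'"]) auto
next
  fix c x assume "x \<in> above a ` {y \<in> CMw (level k) B. dW (level k) B y = 0}"
  then obtain x' where "x' \<in> CMw (level k) B" "dW (level k) B x' = 0" "x = above a x'" by auto
  thus "(\<lambda>t. c * x t) \<in> above a ` {y \<in> CMw (level k) B. dW (level k) B y = 0}"
    using CM_scale fun_complex.d_scale[OF window_complex] above_scale
    by (intro image_eqI[of _ _ "\<lambda>t. c * x' t"]) (auto simp: zero_fun_def)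
qed

text \<open>The images of the higher window cycles at level \<open>n\<close> form a descending chain of
  subspaces of the finite dimensional space \<open>CM_{level n}^B\<close>, hence stabilise.\<close>
lemma cycle_images_stabilise:
  "\<exists>K. \<forall>j\<ge>K. above (level n) ` wcycles B (n + j) = above (level n) ` wcycles B (n + K)"
proof (rule descending_subspaces_stabilise[OF wcycles_subspace])
  show "above (level n) ` wcycles B (n + Suc j) \<subseteq> above (level n) ` wcycles B (n + j)" for j
  proof
    fix x assume "x \<in> above (level n) ` wcycles B (n + Suc j)"
    then obtain z where z: "z \<in> wcycles B (n + Suc j)" "x = above (level n) z" by auto
    have "x = above (level n) (above (level (n + j)) z)"
      using z(2) above_above[OF level_antimono[of n "n + j"]] by simp
    moreover have "above (level (n + j)) z \<in> wcycles B (n + j)" using wcycles_above[OF _ z(1)] by simp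
    ultimately show "x \<in> above (level n) ` wcycles B (n + j)" by blast
  qed
  show "finite (delta ` Cab C f (level n) B)" using finite_Cab by simp
  show "above (level n) ` wcycles B (n + j) \<subseteq> fvs.span (delta ` Cab C f (level n) B)" for j
  proof
    fix x assume "x \<in> above (level n) ` wcycles B (n + j)"
    then obtain z where z: "z \<in> wcycles B (n + j)" "x = above (level n) z" by auto
    have "x \<in> CMw (level n) B" using z above_CM[OF level_antimono[of n "n + j"]] unfolding wcycles_def by auto
    thus "x \<in> fvs.span (delta ` Cab C f (level n) B)"
      by (intro finite_support_in_span[OF finite_Cab]) (auto simp: CM_def)
  qed
qed

text \<open>Consequently the images of the primitives (affine spaces over the cycles) stabilise too.\<close>
lemma primitive_images_stabilise:
  assumes ne: "\<And>k. primitives \<zeta> B k \<noteq> {}"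
  shows "\<exists>K. \<forall>j\<ge>K. above (level n) ` primitives \<zeta> B (n + j) = above (level n) ` primitives \<zeta> B (n + K)"
proof -
  obtain K where K: "\<And>j. j \<ge> K \<Longrightarrow>
      above (level n) ` wcycles B (n + j) = above (level n) ` wcycles B (n + K)"
    using cycle_images_stabilise by blast
  have lowered: "above (level n) (above (level (n + k)) s) = above (level n) s" for k s
    using above_above[OF level_antimono[of n "n + k"]] by simp
  have "above (level n) ` primitives \<zeta> B (n + j) = above (level n) ` primitives \<zeta> B (n + K)" if j: "j \<ge> K" for j
  proof
    show "above (level n) ` primitives \<zeta> B (n + j) \<subseteq> above (level n) ` primitives \<zeta> B (n + K)"
    proof
      fix p assume "p \<in> above (level n) ` primitives \<zeta> B (n + j)"
      then obtain s where s: "s \<in> primitives \<zeta> B (n + j)" "p = above (level n) s" by auto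
      have "above (level (n + K)) s \<in> primitives \<zeta> B (n + K)" using primitives_above[OF _ s(1)] j by simp
      moreover have "p = above (level n) (above (level (n + K)) s)" using s(2) lowered by simp
      ultimately show "p \<in> above (level n) ` primitives \<zeta> B (n + K)" by blast
    qed
    show "above (level n) ` primitives \<zeta> B (n + K) \<subseteq> above (level n) ` primitives \<zeta> B (n + j)"
    proof
      fix p assume "p \<in> above (level n) ` primitives \<zeta> B (n + K)"
      then obtain s where s: "s \<in> primitives \<zeta> B (n + K)" "p = above (level n) s" by auto
      obtain s' where s': "s' \<in> primitives \<zeta> B (n + j)" using ne by blast
      define s'' where "s'' = above (level (n + K)) s'"
      have s'': "s'' \<in> primitives \<zeta> B (n + K)" unfolding s''_def using primitives_above[OF _ s'] j by simp
      have "above (level n) (s - s'') \<in> above (level n) ` wcycles B (n + j)"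
        using primitives_diff[OF s(1) s''] K[OF j] by blast
      then obtain z where z: "z \<in> wcycles B (n + j)" "above (level n) (s - s'') = above (level n) z" by auto
      have "p = above (level n) (s' + z)"
        using s(2) z(2) lowered[of K s'] unfolding s''_def above_add above_diff by (simp add: algebra_simps)
      thus "p \<in> above (level n) ` primitives \<zeta> B (n + j)" using primitives_add_cycle[OF s' z(1)] by blast
    qed
  qed
  thus ?thesis by blast
qed

text \<open>The stable images of the primitives
  admit coherent choices, which glue to a primitive.\<close>
lemma window_boundaries_glue:
  assumes \<zeta>: "\<zeta> \<in> \<Lambda>" "upper_bound f \<zeta> B"
    and bdry: "\<And>a. \<exists>y\<in>CMw a B. trunc f a B \<zeta> = dW a B y"
  shows "\<exists>\<omega>\<in>\<Lambda>. \<zeta> = dN \<omega>"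
proof -
  have ne: "primitives \<zeta> B k \<noteq> {}" for k using bdry[of "level k"] unfolding primitives_def by auto
  have "\<forall>n. \<exists>K. \<forall>j\<ge>K. above (level n) ` primitives \<zeta> B (n + j) = above (level n) ` primitives \<zeta> B (n + K)"
    using primitive_images_stabilise[OF ne] by blast
  from choice[OF this] obtain K where K: "\<And>n j. j \<ge> K n \<Longrightarrow>
      above (level n) ` primitives \<zeta> B (n + j) = above (level n) ` primitives \<zeta> B (n + K n)"
    by blast
  define T where "T n = above (level n) ` primitives \<zeta> B (n + K n)" for n
  have T_prim: "T n \<subseteq> primitives \<zeta> B n" for n
    unfolding T_def using primitives_above[OF le_add1[of n "K n"]] by blast
  have T_lift: "\<exists>t'\<in>T (Suc n). above (level n) t' = t" if "t \<in> T n" for n t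
  proof -
    define J where "J = max (K n) (Suc (K (Suc n)))"
    have J: "J \<ge> K n" "J - 1 \<ge> K (Suc n)" "Suc n + (J - 1) = n + J" unfolding J_def by auto
    have "t \<in> above (level n) ` primitives \<zeta> B (n + J)" using that K[OF J(1)] unfolding T_def by simp
    then obtain s where s: "s \<in> primitives \<zeta> B (n + J)" "t = above (level n) s" by auto
    have "above (level (Suc n)) s \<in> above (level (Suc n)) ` primitives \<zeta> B (Suc n + (J - 1))"
      using s(1) J(3) by simp
    hence "above (level (Suc n)) s \<in> T (Suc n)" using K[OF J(2)] unfolding T_def by simp
    moreover have "above (level n) (above (level (Suc n)) s) = t" using s(2) above_above[OF level_Suc] by simp
    ultimately show ?thesis by blast
  qed
  have "\<exists>t. t \<in> T 0" using ne[of "K 0"] unfolding T_def by auto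
  then obtain tt where tt: "\<And>n. tt n \<in> T n" "\<And>n. above (level n) (tt (Suc n)) = tt n"
    using coherent_sequence_exists[of T "\<lambda>n. above (level n)"] T_lift by blast
  have tt_prim: "tt n \<in> CMw (level n) B" "dW (level n) B (tt n) = trunc f (level n) B \<zeta>" for n
    using tt(1) T_prim unfolding primitives_def by auto
  have "dN (glue tt) = \<zeta>" by (rule dN_glue[OF tt_prim(1) tt(2) \<zeta> tt_prim(2)])
  thus ?thesis using glue_nov[OF tt_prim(1) tt(2)] by blast
qed

text \<open>Injectivity of \<open>\<overline>\<rho>\<close>: if the truncation classes of \<open>\<xi> - \<eta>\<close> vanish in all windows,
  then \<open>\<xi> - \<eta>\<close> is a Novikov boundary.\<close>
lemma rhobar_inj: "inj_on (rhobar C f m) (vcarrier (HMnov C f m))"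
proof (rule inj_onI)
  fix X Y assume X: "X \<in> vcarrier (HMnov C f m)" and Y: "Y \<in> vcarrier (HMnov C f m)"
    and eq: "rhobar C f m X = rhobar C f m Y"
  obtain \<xi> b \<eta> b' where \<xi>: "\<xi> \<in> \<Lambda>" "dN \<xi> = 0" "upper_bound f \<xi> b" "X = hcls \<Lambda> dN \<xi>"
    and \<eta>: "\<eta> \<in> \<Lambda>" "dN \<eta> = 0" "upper_bound f \<eta> b'" "Y = hcls \<Lambda> dN \<eta>"
    using X Y by (metis HMnov_cases)
  define B where "B = max b b'"
  have ub: "upper_bound f \<xi> B" "upper_bound f \<eta> B"
    using bound_mono[OF \<xi>(3)] bound_mono[OF \<eta>(3)] unfolding B_def by auto
  have tc: "trunc_classes \<xi> B \<in> vcarrier (IB B)" "trunc_classes \<eta> B \<in> vcarrier (IB B)"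
    using trunc_classes_in \<xi> \<eta> ub by auto
  have "dcls IB iB B (trunc_classes \<xi> B) = dcls IB iB B (trunc_classes \<eta> B)"
    using eq rho_hcls(1)[OF \<xi>(1,2) ub(1)] rho_hcls(1)[OF \<eta>(1,2) ub(2)] \<xi>(4) \<eta>(4)
    unfolding rhobar_cyc_def by simp
  then obtain B' where B': "B \<le> B'" "iB B' B (trunc_classes \<xi> B) = iB B' B (trunc_classes \<eta> B)"
    using direct_system.dcls_eq_iff[OF IB_direct_system tc] direct_system.stage_eq_def[OF IB_direct_system]
    by auto
  have ub': "upper_bound f \<xi> B'" "upper_bound f \<eta> B'" using bound_mono ub B' by auto
  have same: "trunc_classes \<xi> B' = trunc_classes \<eta> B'"
    using B'(2) iB_trunc_classes[OF \<xi>(1) ub(1) B'(1)] iB_trunc_classes[OF \<eta>(1) ub(2) B'(1)] by simp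
  have bdry: "\<exists>y\<in>CMw a B'. trunc f a B' (\<xi> - \<eta>) = dW a B' y" for a
  proof -
    obtain y where "y \<in> CMw a B'" "trunc f a B' \<xi> = trunc f a B' \<eta> + dW a B' y"
      using fun_cong[OF same, of a] hc_eq_iff[OF trunc_CM[OF \<xi>(1)] trunc_CM[OF \<eta>(1)]] by blast
    thus ?thesis unfolding trunc_diff by (metis add_diff_cancel_left')
  qed
  have diff: "\<xi> - \<eta> \<in> \<Lambda>" "upper_bound f (\<xi> - \<eta>) B'"
    using fun_complex.diff_closed[OF nov_complex \<xi>(1) \<eta>(1)] ub' unfolding upper_bound_def by force+
  obtain \<omega> where "\<omega> \<in> \<Lambda>" "\<xi> - \<eta> = dN \<omega>" using window_boundaries_glue[OF diff bdry] by blast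
  hence "\<xi> = \<eta> + dN \<omega>" by (simp add: algebra_simps)
  thus "X = Y" using nov_hcls_eq_iff[OF \<xi>(1) \<eta>(1)] \<open>\<omega> \<in> \<Lambda>\<close> \<xi>(4) \<eta>(4) by blast
qed

end

context floer begin

lemma hc_above_eq:
  assumes "a1 \<le> a2" "x \<in> CMw a1 B" "y \<in> CMw a1 B" "hc a1 B x = hc a1 B y"
  shows "hc a2 B (above a2 x) = hc a2 B (above a2 y)"
  using HP_hc[OF assms(1,2)] HP_hc[OF assms(1,3)] assms(4) by simp

lemma bound_from_levels:
  assumes "\<And>n. above (level n) \<xi> \<in> CMw (level n) B" shows "upper_bound f \<xi> B"
  unfolding upper_bound_def
proof (intro allI impI)
  fix c assume "\<xi> c \<noteq> 0"
  hence "above (level (nat \<lceil>- f c\<rceil>)) \<xi> c \<noteq> 0" using level_below unfolding above_def by simp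
  thus "f c \<le> B" using assms unfolding CM_iff by blast
qed

text \<open>Surjectivity of \<open>\<overline>\<rho>\<close>: representatives of a coherent family at the levels glue to a cycle.\<close>
lemma rhobar_surj: assumes X: "X \<in> vcarrier (HMbar C f m)"
  shows "\<exists>Y\<in>vcarrier (HMnov C f m). rhobar C f m Y = X"
proof -
  obtain b x where x: "x \<in> vcarrier (IB b)" "X = dcls IB iB b x" using X HMbar_carrier by blast
  have xa: "\<And>a. x a \<in> vcarrier (HM a b)" "\<And>a1 a2. a1 \<le> a2 \<Longrightarrow> HP b a2 a1 (x a1) = x a2"
    using x(1) IB_carrier by auto
  define z where "z n = pick (x (level n))" for n
  have z: "z n \<in> CMw (level n) b" "dW (level n) b (z n) = 0" "hc (level n) b (z n) = x (level n)" for n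
    using pick_HM[OF xa(1)] z_def by auto
  have step: "hc (level n) b (above (level n) (z (Suc n))) = hc (level n) b (z n)" for n
    using HP_hc[OF level_Suc z(1)] z(3) xa(2)[OF level_Suc[of n]] by metis
  obtain \<xi> where \<xi>: "\<xi> \<in> \<Lambda>" "dN \<xi> = 0" "\<And>n. above (level n) \<xi> \<in> CMw (level n) b"
    "\<And>n. hc (level n) b (above (level n) \<xi>) = hc (level n) b (z n)"
    using glue_tower[of z "\<lambda>_. b", OF z(1) z(2) order_refl step] by metis
  have b: "upper_bound f \<xi> b" by (rule bound_from_levels[OF \<xi>(3)])
  have "trunc_classes \<xi> b = x"
  proof (rule ext)
    fix a :: real
    define n where "n = nat \<lceil>- a\<rceil>"
    have n: "level n \<le> a" unfolding n_def by (rule level_below)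
    have "hc a b (trunc f a b \<xi>) = hc a b (above a (above (level n) \<xi>))"
      using trunc_eq_above[OF b] above_above[OF n] by simp
    also have "\<dots> = HP b a (level n) (hc (level n) b (z n))" using HP_hc[OF n \<xi>(3)] \<xi>(4) by simp
    also have "\<dots> = x a" using z(3) xa(2)[OF n] by simp
    finally show "hc a b (trunc f a b \<xi>) = x a" .
  qed
  hence "rhobar C f m (hcls \<Lambda> dN \<xi>) = X" using rho_hcls(1)[OF \<xi>(1,2) b] x(2) unfolding rhobar_cyc_def by simp
  moreover have "hcls \<Lambda> dN \<xi> \<in> vcarrier (HMnov C f m)" using HMnov_carrier \<xi>(1,2) by blast
  ultimately show ?thesis by blast
qed

lemma HMunder_consecutive:
  assumes U: "U \<in> vcarrier (HMunder C f m)"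
    and z1: "z1 \<in> CMw (level (Suc n)) b1" "dW (level (Suc n)) b1 z1 = 0"
      "U (level (Suc n)) = dA (level (Suc n)) b1 (hc (level (Suc n)) b1 z1)"
    and z0: "z0 \<in> CMw (level n) b0" "dW (level n) b0 z0 = 0" "U (level n) = dA (level n) b0 (hc (level n) b0 z0)"
  shows "\<exists>B. b1 \<le> B \<and> b0 \<le> B \<and> hc (level n) B (above (level n) z1) = hc (level n) B z0"
proof -
  have in1: "above (level n) z1 \<in> CMw (level n) b1" by (rule above_CM[OF level_Suc z1(1)])
  have "piA C f m (level n) (level (Suc n)) (U (level (Suc n))) = U (level n)"
    using U level_Suc unfolding HMunder_carrier by blast
  hence "dA (level n) b1 (hc (level n) b1 (above (level n) z1)) = dA (level n) b0 (hc (level n) b0 z0)"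
    using z1(3) z0(3) piA_dA[OF level_Suc HM_carrierI[OF z1(1,2)]] HP_hc[OF level_Suc z1(1)] by simp
  then obtain B where "b1 \<le> B" "b0 \<le> B"
    "HI (level n) B b1 (hc (level n) b1 (above (level n) z1)) = HI (level n) B b0 (hc (level n) b0 z0)"
    using direct_system.dcls_eq_iff[OF HM_direct_system
        HM_carrierI[OF in1 cycle_above[OF level_Suc z1(1,2)]] HM_carrierI[OF z0(1,2)]]
      direct_system.stage_eq_def[OF HM_direct_system] by auto
  thus ?thesis using HI_hc in1 z0(1) by auto
qed

lemma HMunder_tower:
  assumes U: "U \<in> vcarrier (HMunder C f m)"
  obtains z Bw where "\<And>n. z n \<in> CMw (level n) (Bw n)" "\<And>n. dW (level n) (Bw n) (z n) = 0"
    "\<And>n. Bw n \<le> Bw (Suc n)"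
    "\<And>n. hc (level n) (Bw (Suc n)) (above (level n) (z (Suc n))) = hc (level n) (Bw (Suc n)) (z n)"
    "\<And>n. U (level n) = dA (level n) (Bw n) (hc (level n) (Bw n) (z n))"
proof -
  have "\<forall>n. \<exists>b X. X \<in> vcarrier (HM (level n) b) \<and> U (level n) = dA (level n) b X"
    using U unfolding HMunder_carrier dlimA_carrier by blast
  then obtain bb XX where XX: "\<And>n. XX n \<in> vcarrier (HM (level n) (bb n))"
    "\<And>n. U (level n) = dA (level n) (bb n) (XX n)" by metis
  define z where "z n = pick (XX n)" for n
  have z: "z n \<in> CMw (level n) (bb n)" "dW (level n) (bb n) (z n) = 0" "hc (level n) (bb n) (z n) = XX n" for n
    using pick_HM[OF XX(1)] z_def by auto
  have "\<exists>B. bb (Suc n) \<le> B \<and> bb n \<le> B \<and>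
      hc (level n) B (above (level n) (z (Suc n))) = hc (level n) B (z n)" for n
    using HMunder_consecutive[OF U z(1,2) _ z(1,2)] XX(2) z(3) by simp
  then obtain Bn where Bn: "\<And>n. bb (Suc n) \<le> Bn n" "\<And>n. bb n \<le> Bn n"
    "\<And>n. hc (level n) (Bn n) (above (level n) (z (Suc n))) = hc (level n) (Bn n) (z n)"
    by metis
  define Bw where "Bw = rec_nat (bb 0) (\<lambda>n B. max B (max (bb (Suc n)) (Bn n)))"
  have Bw0: "Bw 0 = bb 0" and BwS: "Bw (Suc n) = max (Bw n) (max (bb (Suc n)) (Bn n))" for n
    unfolding Bw_def by simp_all
  have bb_Bw: "bb n \<le> Bw n" for n by (cases n) (auto simp: Bw0 BwS)
  have Bw_mono: "Bw n \<le> Bw (Suc n)" and Bn_Bw: "Bn n \<le> Bw (Suc n)" for n using BwS by simp_all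
  show ?thesis
  proof (rule that[of z Bw])
    show "z n \<in> CMw (level n) (Bw n)" "dW (level n) (Bw n) (z n) = 0" for n
      using CM_mono[OF order_refl bb_Bw z(1)] cycle_up[OF bb_Bw z(1,2)] by auto
    show "Bw n \<le> Bw (Suc n)" for n by (rule Bw_mono)
    show "hc (level n) (Bw (Suc n)) (above (level n) (z (Suc n))) = hc (level n) (Bw (Suc n)) (z n)" for n
      using Bn(3)[of n] HI_hc[OF Bn_Bw CM_mono[OF order_refl Bn(1) above_CM[OF level_Suc z(1)]]]
        HI_hc[OF Bn_Bw CM_mono[OF order_refl Bn(2) z(1)]] by metis
    show "U (level n) = dA (level n) (Bw n) (hc (level n) (Bw n) (z n))" for n
      using XX(2) z(3) direct_system.dcls_push[OF HM_direct_system HM_carrierI[OF z(1,2)] bb_Bw]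
        HI_hc[OF bb_Bw z(1)] by simp
  qed
qed

text \<open>Surjectivity of \<open>\<underline>\<rho>\<close>: the tower of an element of \<open>\<underline>HM\<close> glues to a cycle.\<close>
lemma rhounder_surj: assumes U: "U \<in> vcarrier (HMunder C f m)"
  shows "\<exists>X\<in>vcarrier (HMnov C f m). rhounder C f m X = U"
proof -
  obtain z Bw where z: "\<And>n. z n \<in> CMw (level n) (Bw n)" "\<And>n. dW (level n) (Bw n) (z n) = 0"
    "\<And>n. Bw n \<le> Bw (Suc n)"
    "\<And>n. hc (level n) (Bw (Suc n)) (above (level n) (z (Suc n))) = hc (level n) (Bw (Suc n)) (z n)"
    "\<And>n. U (level n) = dA (level n) (Bw n) (hc (level n) (Bw n) (z n))"
    using HMunder_tower[OF U] by metis
  obtain \<xi> where \<xi>: "\<xi> \<in> \<Lambda>" "dN \<xi> = 0" "\<And>n. above (level n) \<xi> \<in> CMw (level n) (Bw n)"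
    "\<And>n. hc (level n) (Bw n) (above (level n) \<xi>) = hc (level n) (Bw n) (z n)"
    using glue_tower[OF z(1-4)] by metis
  obtain b where b: "upper_bound f \<xi> b" using nov_bounded[OF \<xi>(1)] by blast
  have "rhounder_cyc C f m \<xi> b a = U a" for a
  proof -
    define n where "n = nat \<lceil>- a\<rceil>"
    have n: "level n \<le> a" unfolding n_def by (rule level_below)
    define T where "T = max b (Bw n)"
    have T: "b \<le> T" "Bw n \<le> T" unfolding T_def by auto
    have t: "trunc f a b \<xi> = above a (above (level n) \<xi>)" using trunc_eq_above[OF b] above_above[OF n] by simp
    have in_\<xi>: "above a (above (level n) \<xi>) \<in> CMw a (Bw n)" by (rule above_CM[OF n \<xi>(3)])
    have in_z: "above a (z n) \<in> CMw a (Bw n)" by (rule above_CM[OF n z(1)])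
    have "hc a (Bw n) (above a (above (level n) \<xi>)) = hc a (Bw n) (above a (z n))"
      by (rule hc_above_eq[OF n \<xi>(3) z(1) \<xi>(4)])
    hence "hc a T (above a (above (level n) \<xi>)) = hc a T (above a (z n))"
      using HI_hc[OF T(2) in_\<xi>] HI_hc[OF T(2) in_z] by metis
    hence "dA a b (hc a b (trunc f a b \<xi>)) = dA a (Bw n) (hc a (Bw n) (above a (z n)))"
      unfolding t using trunc_CM[OF \<xi>(1), of a b] trunc_cycle[OF \<xi>(1,2) b, of a] in_z
        cycle_above[OF n z(1,2)] T
      by (intro dA_eqI) (auto simp: t)
    also have "\<dots> = piA C f m a (level n) (U (level n))"
      using z(5) piA_dA[OF n HM_carrierI[OF z(1,2)]] HP_hc[OF n z(1)] by simp
    also have "\<dots> = U a" using U n unfolding HMunder_carrier by blast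
    finally show ?thesis unfolding rhounder_cyc_def .
  qed
  hence "rhounder C f m (hcls \<Lambda> dN \<xi>) = U" using rho_hcls(2)[OF \<xi>(1,2) b] by auto
  moreover have "hcls \<Lambda> dN \<xi> \<in> vcarrier (HMnov C f m)" using HMnov_carrier \<xi>(1,2) by blast
  ultimately show ?thesis by blast
qed

end

context floer begin

lemma rhobar_iso: "lin_iso (HMnov C f m) (HMbar C f m) (rhobar C f m)"
proof -
  have "rhobar C f m ` vcarrier (HMnov C f m) = vcarrier (HMbar C f m)"
    using rhobar_linear rhobar_surj unfolding lin_map_def by blast
  thus ?thesis unfolding lin_iso_def bij_betw_def using rhobar_linear rhobar_inj by blast
qed

lemma rhounder_image: "rhounder C f m ` vcarrier (HMnov C f m) = vcarrier (HMunder C f m)"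
  using rhounder_linear rhounder_surj unfolding lin_map_def by blast

text \<open>\<open>\<kappa>\<close> is onto because \<open>\<underline>\<rho>\<close> is and \<open>\<underline>\<rho>\<close> factors through \<open>\<kappa>\<close>.\<close>
lemma kappa_image: "kappa C f m ` vcarrier (HMbar C f m) = vcarrier (HMunder C f m)"
proof
  show "kappa C f m ` vcarrier (HMbar C f m) \<subseteq> vcarrier (HMunder C f m)"
    using kappa_linear unfolding lin_map_def by blast
  show "vcarrier (HMunder C f m) \<subseteq> kappa C f m ` vcarrier (HMbar C f m)"
  proof
    fix U assume "U \<in> vcarrier (HMunder C f m)"
    then obtain X where X: "X \<in> vcarrier (HMnov C f m)" "U = rhounder C f m X"
      using rhounder_image by blast
    have "rhobar C f m X \<in> vcarrier (HMbar C f m)" using rhobar_linear X(1) unfolding lin_map_def by blast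
    thus "U \<in> kappa C f m ` vcarrier (HMbar C f m)" using kappa_rhobar[OF X(1)] X(2) by (metis image_eqI)
  qed
qed

end

theorem theoremA:
  fixes C :: "'c set" and f :: "'c \<Rightarrow> real" and m :: "'c \<Rightarrow> 'c \<Rightarrow> 'k::field"
  assumes "floer_triple C f m"
  shows
    \<comment> \<open>well-definedness of \<open>\<overline>\<rho>\<close>, \<open>\<underline>\<rho>\<close>: independent of the cycle representative and of the bound\<close>
    "(\<forall>\<xi>\<in>Nov C f. \<forall>\<xi>'\<in>Nov C f. \<forall>b b'.
        dNov C m \<xi> = 0 \<and> dNov C m \<xi>' = 0 \<and> hcls (Nov C f) (dNov C m) \<xi> = hcls (Nov C f) (dNov C m) \<xi>'
        \<and> upper_bound f \<xi> b \<and> upper_bound f \<xi>' b' \<longrightarrow>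
        rhobar_cyc C f m \<xi> b = rhobar_cyc C f m \<xi>' b' \<and> rhounder_cyc C f m \<xi> b = rhounder_cyc C f m \<xi>' b')
     \<and> \<comment> \<open>well-definedness of \<open>\<kappa>\<close>: independent of the representative\<close>
     (\<forall>D\<in>vcarrier (HMbar C f m). \<forall>p\<in>D. \<forall>q\<in>D. kappa_rep C f m p = kappa_rep C f m q)
     \<and> lin_map (HMnov C f m) (HMbar C f m) (rhobar C f m)
     \<and> lin_map (HMnov C f m) (HMunder C f m) (rhounder C f m)
     \<and> lin_map (HMbar C f m) (HMunder C f m) (kappa C f m)
     \<and> (\<forall>X\<in>vcarrier (HMnov C f m). kappa C f m (rhobar C f m X) = rhounder C f m X)
     \<and> lin_iso (HMnov C f m) (HMbar C f m) (rhobar C f m)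
     \<and> kappa C f m ` vcarrier (HMbar C f m) = vcarrier (HMunder C f m)
     \<and> rhounder C f m ` vcarrier (HMnov C f m) = vcarrier (HMunder C f m)"
proof -
  interpret floer C f m by (rule floer.intro[OF assms])
  have rho_well_defined: "\<forall>\<xi>\<in>Nov C f. \<forall>\<xi>'\<in>Nov C f. \<forall>b b'.
        dNov C m \<xi> = 0 \<and> dNov C m \<xi>' = 0 \<and> hcls (Nov C f) (dNov C m) \<xi> = hcls (Nov C f) (dNov C m) \<xi>'
        \<and> upper_bound f \<xi> b \<and> upper_bound f \<xi>' b' \<longrightarrow>
        rhobar_cyc C f m \<xi> b = rhobar_cyc C f m \<xi>' b' \<and> rhounder_cyc C f m \<xi> b = rhounder_cyc C f m \<xi>' b'"
    using rho_cyc_well_defined by blast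
  have kappa_well_defined:
    "\<forall>D\<in>vcarrier (HMbar C f m). \<forall>p\<in>D. \<forall>q\<in>D. kappa_rep C f m p = kappa_rep C f m q"
    using kappa_rep_well_defined by blast
  have compatible: "\<forall>X\<in>vcarrier (HMnov C f m). kappa C f m (rhobar C f m X) = rhounder C f m X"
    using kappa_rhobar by blast
  show ?thesis
    by (intro conjI rho_well_defined kappa_well_defined rhobar_linear rhounder_linear kappa_linear
        compatible rhobar_iso kappa_image rhounder_image)
qed

end
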